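(* Let $d\in\mathbb{N}_+$ and let $u:\mathbb{R}\times\mathbb{R}^d\to\mathbb{R}^d$ be a real vector field with $\tilde u:=\mathcal{F}_{t,x}u$, for which the integrals below are well defined. For any $f\in C^\infty_c(\mathbb{R}^{1+2d})$, any nonnegative $\chi(\tau,\xi,\eta)\in C_b^\infty(\mathbb{R}^{1+2d})$, and any constants $s,r\ge0$, $$\int \chi\, |\xi|^2\langle\xi\rangle^{2s-2}\langle\eta\rangle^{-2-2r}\left(1+(1-2r)|\eta|^2\right)|\hat{f}|^2\le \int|\nabla_\eta\chi|\langle\xi\rangle^{2s}\langle\eta\rangle^{1-2r}|\hat{f}|^2+ 2\left| \int \chi\,\xi\cdot\eta\,\langle\xi\rangle^{2s-2}\langle\eta\rangle^{-2r}X\hat{f}\, \overline{\hat{f}}\,\right|+ 2\,\mathrm{Im} \int \chi\,\xi\cdot\eta\,\langle\xi\rangle^{2s-2}\langle\eta\rangle^{-2r}\xi\cdot(\tilde{u}*_{\tau,\xi}\hat{f})\, \overline{\hat{f}},$$ and $$\int \chi |\tau|^2\langle\tau\rangle^{2s-2}\langle\eta\rangle^{-2r} |\hat{f}|^2= -\mathrm{Re} \int \chi\,\tau\langle\tau\rangle^{2s-2}\langle\eta\rangle^{-2r} \xi\cdot\widehat{vf}\,\overline{\hat{f}}+\mathrm{Im}\int\chi\,\tau\langle\tau\rangle^{2s-2}\langle\eta\rangle^{-2r} X\hat{f}\,\overline{\hat{f}}-\mathrm{Re} \int\chi\,\tau\langle\tau\rangle^{2s-2}\langle\eta\rangle^{-2r}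 \xi\cdot(\tilde{u}*_{\tau,\xi}\hat{f})\,\overline{\hat{f}}.$$
   Context: $\hat{\cdot}$ denotes the Fourier transform in all variables $(t,x,v)\mapsto(\tau,\xi,\eta)$ (with the convention $\widehat{\partial_t f}=i\tau\hat f$, $\widehat{vf}=i\nabla_\eta\hat f$), $\mathcal{F}_{t,x}$ the Fourier transform in $(t,x)\mapsto(\tau,\xi)$, and $*_{\tau,\xi}$ convolution in $(\tau,\xi)$, normalized so that $\mathcal{F}_{t,x}(uf)=\tilde u*_{\tau,\xi}\mathcal{F}_{t,x}f$. $\int$ means integration over $(\tau,\xi,\eta)\in\mathbb{R}\times\mathbb{R}^d\times\mathbb{R}^d$, $\langle\cdot\rangle=(1+|\cdot|^2)^{1/2}$, and $X$ is the operator $X\hat f:=i\tau\hat f-\xi\cdot\nabla_\eta\hat f+i\xi\cdot(\tilde u*_{\tau,\xi}\hat f)$ (the Fourier transform of $\partial_tf+\nabla_x\cdot(vf+uf)$). *)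

theory Defs
  imports "HOL-Analysis.Analysis"
begin

text \<open>Phase space points (t,x,v) and frequency points (tau,xi,eta) both live in
  real \<times> (real^'d) \<times> (real^'d).\<close>

type_synonym 'd pt = "real \<times> (real^'d) \<times> (real^'d)"

definition jbr :: "'a::real_normed_vector \<Rightarrow> real" where
  "jbr a = sqrt (1 + (norm a)\<^sup>2)"

definition dirderiv :: "('a::real_normed_vector \<Rightarrow> 'b::real_normed_vector) \<Rightarrow> 'a \<Rightarrow> 'a \<Rightarrow> 'b" where
  "dirderiv g e p = vector_derivative (\<lambda>h::real. g (p + h *\<^sub>R e)) (at 0)"

fun iter_pd :: "'a::real_normed_vector list \<Rightarrow> ('a \<Rightarrow> 'b::real_normed_vector) \<Rightarrow> 'a \<Rightarrow> 'b" where
  "iter_pd [] g = g"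
| "iter_pd (e # es) g = dirderiv (iter_pd es g) e"

text \<open>C^\<infinity>: every iterated partial derivative (along basis directions) exists and is
  (Frechet) differentiable everywhere; hence all partials of all orders are continuous.\<close>
definition smooth :: "('a::euclidean_space \<Rightarrow> 'b::real_normed_vector) \<Rightarrow> bool" where
  "smooth g \<longleftrightarrow> (\<forall>es. set es \<subseteq> Basis \<longrightarrow> (\<forall>p. iter_pd es g differentiable (at p)))"

definition smooth_compact_support :: "('a::euclidean_space \<Rightarrow> 'b::real_normed_vector) \<Rightarrow> bool" where
  "smooth_compact_support g \<longleftrightarrow> smooth g \<and> compact (closure {p. g p \<noteq> 0})"

definition smooth_bounded :: "('a::euclidean_space \<Rightarrow> 'b::real_normed_vector) \<Rightarrow> bool" where
  "smooth_bounded g \<longleftrightarrow> smooth g \<and> (\<forall>es. set es \<subseteq> Basis \<longrightarrow> bounded (range (iter_pd es g)))"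

text \<open>Fourier transform in all variables (t,x,v) \<mapsto> (tau,xi,eta):
  \<open>\<hat>g(\<omega>) = \<integral> e^{-i p\<cdot>\<omega>} g(p) dp\<close>, so that \<open>\<partial>_t \<mapsto> i\<tau>\<close> and \<open>v \<mapsto> i\<nabla>_\<eta>\<close>.\<close>
definition FT :: "('d::finite pt \<Rightarrow> complex) \<Rightarrow> 'd pt \<Rightarrow> complex" where
  "FT g \<omega> = (LINT p|lborel. cis (- (p \<bullet> \<omega>)) * g p)"

definition fhat :: "('d::finite pt \<Rightarrow> real) \<Rightarrow> 'd pt \<Rightarrow> complex" where
  "fhat f = FT (\<lambda>p. complex_of_real (f p))"

text \<open>j-th component of \<open>\<tilde>u *_{\<tau>,\<xi>} \<hat>f\<close>; by the stated normalization
  \<open>\<F>_{t,x}(u f) = \<tilde>u * \<F>_{t,x} f\<close> (and since u does not depend on v)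
  this is the full Fourier transform of \<open>u_j f\<close>.\<close>
definition uconv :: "(real \<times> (real^'d) \<Rightarrow> real^'d) \<Rightarrow> ('d::finite pt \<Rightarrow> real) \<Rightarrow> 'd \<Rightarrow> 'd pt \<Rightarrow> complex" where
  "uconv u f j = FT (\<lambda>p. complex_of_real (u (fst p, fst (snd p)) $ j * f p))"

definition vfhat :: "('d::finite pt \<Rightarrow> real) \<Rightarrow> 'd \<Rightarrow> 'd pt \<Rightarrow> complex" where
  "vfhat f j = FT (\<lambda>p. complex_of_real (snd (snd p) $ j * f p))"

definition deta :: "('d::finite pt \<Rightarrow> 'b::real_normed_vector) \<Rightarrow> 'd \<Rightarrow> 'd pt \<Rightarrow> 'b" where
  "deta g j = dirderiv g (0, 0, axis j 1)"

definition grad_eta :: "('d::finite pt \<Rightarrow> real) \<Rightarrow> 'd pt \<Rightarrow> real^'d" where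
  "grad_eta g \<omega> = (\<chi> j. deta g j \<omega>)"

definition Xop :: "(real \<times> (real^'d) \<Rightarrow> real^'d) \<Rightarrow> ('d::finite pt \<Rightarrow> real) \<Rightarrow> 'd pt \<Rightarrow> complex" where
  "Xop u f \<omega> = (case \<omega> of (\<tau>, \<xi>, \<eta>) \<Rightarrow>
      \<i> * of_real \<tau> * fhat f \<omega>
      - (\<Sum>j\<in>UNIV. of_real (\<xi> $ j) * deta (fhat f) j \<omega>)
      + \<i> * (\<Sum>j\<in>UNIV. of_real (\<xi> $ j) * uconv u f j \<omega>))"

end

theory Submission
  imports Defs
begin

text \<open>
  Since the \<open>\<eta>\<close>-gradient of \<open>fhat f\<close> is \<open>-\<i>\<close> times the transform \<open>vfhat f\<close> of \<open>v f\<close>,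
  one has \<open>X fhat = \<i> (\<tau> fhat + \<xi>\<cdot>vfhat + \<xi>\<cdot>(u * fhat))\<close>. Multiplying by the real weight
  \<open>\<chi> \<tau> \<langle>\<tau>\<rangle>^(2s-2) \<langle>\<eta>\<rangle>^(-2r)\<close> and by \<open>cnj fhat\<close> and taking imaginary parts gives the
  identity for the time frequency pointwise, before integration.

  For the inequality put \<open>W = \<chi> (\<xi>\<cdot>\<eta>) \<langle>\<xi>\<rangle>^(2s-2) \<langle>\<eta>\<rangle>^(-2r)\<close>. For each \<open>j\<close> the
  flux \<open>\<xi>\<^sub>j W |fhat|\<^sup>2\<close> and its derivative in \<open>\<eta>\<^sub>j\<close> are integrable, so the derivative
  integrates to zero. Summed over \<open>j\<close>, these derivatives are
  \<open>(\<xi>\<cdot>\<nabla>\<^sub>\<eta>W) |fhat|\<^sup>2 - 2 Re (W X fhat cnj fhat) - 2 Im (W \<xi>\<cdot>(u * fhat) cnj fhat)\<close>,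
  and by Cauchy-Schwarz the density on the left of the inequality is bounded pointwise by
  \<open>(\<xi>\<cdot>\<nabla>\<^sub>\<eta>W) |fhat|\<^sup>2 + |\<nabla>\<^sub>\<eta>\<chi>| \<langle>\<xi>\<rangle>^(2s) \<langle>\<eta>\<rangle>^(1-2r) |fhat|\<^sup>2\<close>.

  All integrability comes from the rapid decay of \<open>fhat f\<close> and \<open>vfhat f\<close>: integrating by
  parts, the transform of a derivative of \<open>f\<close> (or of \<open>v f\<close>) is a linear factor times the
  transform of \<open>f\<close>, up to lower order terms, and every transform is bounded by an \<open>L\<^sup>1\<close> norm.
\<close>

section \<open>Polynomial weights and rapid decay\<close>

lemma summable_cube_volume_over_power:
  fixes n N :: nat assumes "n + 2 \<le> 2 * N"
  shows "summable (\<lambda>k::nat. inverse ((1 + (real k)\<^sup>2) ^ N) * (2 * (real k + 1)) ^ n)"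
proof -
  have s: "summable (\<lambda>k::nat. 2 ^ (N + n) * inverse ((real k + 1) ^ 2))"
  proof -
    have "summable (\<lambda>k::nat. inverse (real k ^ 2))"
      using inverse_power_summable[of 2, where 'a=real] by simp
    then have "summable (\<lambda>k::nat. inverse (real (Suc k) ^ 2))"
      by (subst summable_Suc_iff)
    then show ?thesis by (intro summable_mult) (simp add: add.commute)
  qed
  show ?thesis
  proof (rule summable_comparison_test'[OF s])
    fix k :: nat
    define a where "a = real k + 1"
    have a1: "a \<ge> 1" by (simp add: a_def)
    have h1: "(1 + (real k)\<^sup>2) \<ge> a\<^sup>2 / 2"
    proof -
      have sq: "0 \<le> (real k - 1)*(real k - 1)" by simp
      then show ?thesis unfolding a_def by (simp add: power2_eq_square field_simps)
    qed
    have h2: "(1 + (real k)\<^sup>2) ^ N \<ge> (a\<^sup>2 / 2) ^ N"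
      by (rule power_mono[OF h1]) (simp)
    have pos: "(a\<^sup>2 / 2) ^ N > 0" using a1 by simp
    have "inverse ((1 + (real k)\<^sup>2) ^ N) \<le> inverse ((a\<^sup>2 / 2) ^ N)"
      using h2 pos by (simp add: le_imp_inverse_le)
    also have "\<dots> = 2 ^ N / a ^ (2 * N)"
      by (simp add: power_divide power_mult field_simps flip: power_mult)
    finally have i1: "inverse ((1 + (real k)\<^sup>2) ^ N) \<le> 2 ^ N / a ^ (2 * N)" .
    have "a ^ (n + 2) \<le> a ^ (2 * N)" using a1 assms by (intro power_increasing) auto
    then have "a ^ n * a ^ 2 \<le> a ^ (2 * N)" by (simp only: power_add)
    then have i2: "a ^ n / a ^ (2 * N) \<le> inverse (a ^ 2)"
      using a1 by (simp add: field_simps)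
    have "norm (inverse ((1 + (real k)\<^sup>2) ^ N) * (2 * (real k + 1)) ^ n)
        = inverse ((1 + (real k)\<^sup>2) ^ N) * (2 ^ n * a ^ n)"
    proof -
      have e: "(2 * (real k + 1)) ^ n = 2 ^ n * a ^ n" unfolding a_def by (rule power_mult_distrib)
      show ?thesis unfolding e real_norm_def by (rule abs_of_nonneg) (simp add: a_def)
    qed
    also have "\<dots> \<le> 2 ^ N / a ^ (2 * N) * (2 ^ n * a ^ n)"
      by (rule mult_right_mono[OF i1]) (use a1 in simp)
    also have "\<dots> = 2 ^ (N + n) * (a ^ n / a ^ (2 * N))"
      by (simp add: power_add field_simps)
    also have "\<dots> \<le> 2 ^ (N + n) * inverse (a ^ 2)"
      by (rule mult_left_mono[OF i2]) simp
    finally show "norm (inverse ((1 + (real k)\<^sup>2) ^ N) * (2 * (real k + 1)) ^ n)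
        \<le> 2 ^ (N + n) * inverse ((real k + 1) ^ 2)" by (simp add: a_def)
  qed
qed

lemma inverse_power_le_sum_cubes:
  fixes x :: "'a::euclidean_space"
  shows "ennreal (inverse ((1 + (norm x)\<^sup>2) ^ N))
    \<le> (\<Sum>k. ennreal (inverse ((1 + (real k)\<^sup>2) ^ N))
              * indicator (cbox (- ((real k + 1) *\<^sub>R One)) ((real k + 1) *\<^sub>R One)) x)"
    (is "_ \<le> (\<Sum>k. ?F k)")
proof -
  define k where "k = nat \<lfloor>norm x\<rfloor>"
  have "real k = of_int \<lfloor>norm x\<rfloor>" unfolding k_def by simp
  then have k1: "real k \<le> norm x" and k2: "norm x < real k + 1" by linarith+
  have "x \<in> cbox (- ((real k + 1) *\<^sub>R One)) ((real k + 1) *\<^sub>R One)" unfolding mem_box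
  proof (intro ballI conjI)
    fix b :: 'a assume b: "b \<in> Basis"
    have "\<bar>x \<bullet> b\<bar> \<le> norm x" using Basis_le_norm[OF b] .
    then show "(- ((real k + 1) *\<^sub>R One)) \<bullet> b \<le> x \<bullet> b" "x \<bullet> b \<le> ((real k + 1) *\<^sub>R One) \<bullet> b"
      using b k2 by (auto simp: inner_minus_left abs_le_iff)
  qed
  moreover have "(1 + (real k)\<^sup>2) ^ N \<le> (1 + (norm x)\<^sup>2) ^ N"
    using k1 by (intro power_mono) (auto intro: power_mono)
  then have "inverse ((1 + (norm x)\<^sup>2) ^ N) \<le> inverse ((1 + (real k)\<^sup>2) ^ N)"
    by (intro le_imp_inverse_le) (auto intro!: zero_less_power add_pos_nonneg)
  ultimately have "ennreal (inverse ((1 + (norm x)\<^sup>2) ^ N)) \<le> ?F k"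
    by (simp add: ennreal_leI)
  also have "?F k \<le> (\<Sum>k. ?F k)"
  proof -
    define F where "F = ?F"
    have "(\<Sum>i\<in>{k}. F i) \<le> suminf F" by (rule sum_le_suminf) (auto intro: summableI)
    then have "F k \<le> suminf F" by simp
    then show ?thesis by (simp add: F_def)
  qed
  finally show ?thesis .
qed

lemma integrable_inverse_power_one_plus_norm_sq:
  assumes "DIM('a) + 2 \<le> 2 * N"
  shows "integrable lborel (\<lambda>x::'a::euclidean_space. inverse ((1 + (norm x)\<^sup>2) ^ N))"
proof -
  define c where "c k = inverse ((1 + (real k)\<^sup>2) ^ N)" for k :: nat
  define B where "B k = cbox (- ((real k + 1) *\<^sub>R One)) ((real k + 1) *\<^sub>R (One::'a))" for k :: nat
  have "(\<integral>\<^sup>+x. ennreal (inverse ((1 + (norm (x::'a))\<^sup>2) ^ N)) \<partial>lborel)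
      \<le> (\<integral>\<^sup>+x. (\<Sum>k. ennreal (c k) * indicator (B k) x) \<partial>lborel)"
    unfolding c_def B_def by (rule nn_integral_mono, rule inverse_power_le_sum_cubes)
  also have "\<dots> = (\<Sum>k. \<integral>\<^sup>+x. ennreal (c k) * indicator (B k) x \<partial>lborel)"
    by (intro nn_integral_suminf) (auto simp: B_def)
  also have "\<dots> = (\<Sum>k. ennreal (c k * (2 * (real k + 1)) ^ DIM('a)))"
  proof (intro suminf_cong)
    fix k
    have "(\<Prod>b\<in>Basis. ((real k + 1) *\<^sub>R One + (real k + 1) *\<^sub>R (One::'a)) \<bullet> b) = (\<Prod>b\<in>(Basis::'a set). 2 * (real k + 1))"
      by (intro prod.cong) (auto simp: inner_add_left)
    then have "emeasure lborel (B k) = ennreal ((2 * (real k + 1)) ^ DIM('a))"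
      unfolding B_def by (subst emeasure_lborel_cbox_eq) (auto simp: inner_minus_left prod_constant)
    then show "(\<integral>\<^sup>+x. ennreal (c k) * indicator (B k) x \<partial>lborel) = ennreal (c k * (2 * (real k + 1)) ^ DIM('a))"
      by (subst nn_integral_cmult_indicator) (auto simp: B_def c_def ennreal_mult)
  qed
  also have "\<dots> = ennreal (\<Sum>k. c k * (2 * (real k + 1)) ^ DIM('a))"
    by (intro suminf_ennreal2) (use summable_cube_volume_over_power[of "DIM('a)" N] assms in \<open>auto simp: c_def\<close>)
  also have "\<dots> < \<infinity>" by simp
  finally show ?thesis
    by (intro integrableI_bounded) simp_all
qed

lemma power2_norm_eq_sum_Basis: "(norm (x::'a::euclidean_space))\<^sup>2 = (\<Sum>b\<in>Basis. (x \<bullet> b)\<^sup>2)"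
  unfolding power2_norm_eq_inner by (subst euclidean_inner) (simp add: power2_eq_square)

lemma weight_Suc_bound:
  fixes n :: "'a::euclidean_space \<Rightarrow> real"
  assumes "\<And>\<omega>. (1 + (norm \<omega>)\<^sup>2)^N * n \<omega> \<le> C0"
    and "\<And>b \<omega>. b \<in> Basis \<Longrightarrow> (1 + (norm \<omega>)\<^sup>2)^N * ((\<omega> \<bullet> b)\<^sup>2 * n \<omega>) \<le> c b"
  shows "(1 + (norm \<omega>)\<^sup>2)^Suc N * n \<omega> \<le> C0 + (\<Sum>b\<in>Basis. c b)"
proof -
  have "(1 + (norm \<omega>)\<^sup>2)^Suc N * n \<omega> = (1 + (norm \<omega>)\<^sup>2)^N * n \<omega> + (norm \<omega>)\<^sup>2 * ((1 + (norm \<omega>)\<^sup>2)^N * n \<omega>)"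
    by (simp add: algebra_simps)
  also have "(norm \<omega>)\<^sup>2 * ((1 + (norm \<omega>)\<^sup>2)^N * n \<omega>) = (\<Sum>b\<in>Basis. (1 + (norm \<omega>)\<^sup>2)^N * ((\<omega> \<bullet> b)\<^sup>2 * n \<omega>))"
    unfolding power2_norm_eq_sum_Basis[of \<omega>] sum_distrib_right by (simp add: mult_ac)
  also have "(1 + (norm \<omega>)\<^sup>2)^N * n \<omega> + \<dots> \<le> C0 + (\<Sum>b\<in>Basis. c b)"
    by (intro add_mono assms sum_mono) auto
  finally show ?thesis .
qed

lemma one_plus_power2_norm_power_mono:
  "a \<le> b \<Longrightarrow> (1 + (norm (\<omega>::'a::real_normed_vector))\<^sup>2) ^ a \<le> (1 + (norm \<omega>)\<^sup>2) ^ b"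
  by (rule power_increasing) auto

definition rapid_decay :: "('a::euclidean_space \<Rightarrow> real) \<Rightarrow> bool" where
  "rapid_decay n \<longleftrightarrow> (\<forall>N. \<exists>C. \<forall>\<omega>. (1 + (norm \<omega>)\<^sup>2)^N * n \<omega> \<le> C)"

lemma rapid_decayD: "rapid_decay n \<Longrightarrow> \<exists>C. \<forall>\<omega>. (1 + (norm \<omega>)\<^sup>2)^N * n \<omega> \<le> C"
  unfolding rapid_decay_def by blast

lemma rapid_decay_mult:
  assumes "rapid_decay n1" "rapid_decay n2" "\<And>\<omega>. n1 \<omega> \<ge> 0" "\<And>\<omega>. n2 \<omega> \<ge> 0"
  shows "rapid_decay (\<lambda>\<omega>. n1 \<omega> * n2 \<omega>)"
  unfolding rapid_decay_def
proof
  fix N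
  obtain C1 where C1: "\<And>\<omega>. (1 + (norm \<omega>)\<^sup>2)^N * n1 \<omega> \<le> C1" using rapid_decayD[OF assms(1)] by blast
  obtain C2 where C2: "\<And>\<omega>. (1 + (norm \<omega>)\<^sup>2)^0 * n2 \<omega> \<le> C2" using rapid_decayD[OF assms(2)] by blast
  have "(1 + (norm \<omega>)\<^sup>2)^N * (n1 \<omega> * n2 \<omega>) \<le> C1 * C2" for \<omega>
  proof -
    have "(1 + (norm \<omega>)\<^sup>2)^N * (n1 \<omega> * n2 \<omega>) = ((1 + (norm \<omega>)\<^sup>2)^N * n1 \<omega>) * n2 \<omega>" by simp
    also have "\<dots> \<le> C1 * C2"
    proof (rule mult_mono)
      have "0 \<le> (1 + (norm \<omega>)\<^sup>2)^N * n1 \<omega>" using assms(3)[of \<omega>] by simp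
      then show "0 \<le> C1" using C1[of \<omega>] by linarith
    qed (use C1[of \<omega>] C2[of \<omega>] assms(4)[of \<omega>] in auto)
    finally show ?thesis .
  qed
  then show "\<exists>C. \<forall>\<omega>. (1 + (norm \<omega>)\<^sup>2)^N * (n1 \<omega> * n2 \<omega>) \<le> C" by blast
qed

lemma rapid_decay_sum:
  assumes "finite I" "\<And>i. i \<in> I \<Longrightarrow> rapid_decay (n i)"
  shows "rapid_decay (\<lambda>\<omega>. \<Sum>i\<in>I. n i \<omega>)"
  using assms
proof (induction I rule: finite_induct)
  case empty
  then show ?case unfolding rapid_decay_def by auto
next
  case (insert i I)
  show ?case unfolding rapid_decay_def
  proof
    fix N
    obtain C1 where C1: "\<And>\<omega>. (1 + (norm \<omega>)\<^sup>2)^N * n i \<omega> \<le> C1" using rapid_decayD insert by blast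
    obtain C2 where C2: "\<And>\<omega>. (1 + (norm \<omega>)\<^sup>2)^N * (\<Sum>i\<in>I. n i \<omega>) \<le> C2" using rapid_decayD insert by blast
    have "(1 + (norm \<omega>)\<^sup>2)^N * (\<Sum>i\<in>insert i I. n i \<omega>) \<le> C1 + C2" for \<omega>
      using C1[of \<omega>] C2[of \<omega>] insert.hyps by (simp add: distrib_left)
    then show "\<exists>C. \<forall>\<omega>. (1 + (norm \<omega>)\<^sup>2)^N * (\<Sum>i\<in>insert i I. n i \<omega>) \<le> C" by blast
  qed
qed

lemma rapid_decay_bound:
  assumes "rapid_decay n"
  shows "\<exists>C. \<forall>\<omega>::'a::euclidean_space. (1 + (norm \<omega>)\<^sup>2)^K * n \<omega> \<le> C * inverse ((1 + (norm \<omega>)\<^sup>2)^M)"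
proof -
  obtain C where C: "\<And>\<omega>. (1 + (norm \<omega>)\<^sup>2)^(K + M) * n \<omega> \<le> C" using rapid_decayD[OF assms] by blast
  have "(1 + (norm \<omega>)\<^sup>2)^K * n \<omega> \<le> C * inverse ((1 + (norm \<omega>)\<^sup>2)^M)" for \<omega> :: 'a
  proof -
    have p: "(1 + (norm \<omega>)\<^sup>2)^M > 0" by (simp add: add_pos_nonneg)
    have "(1 + (norm \<omega>)\<^sup>2)^K * n \<omega> * (1 + (norm \<omega>)\<^sup>2)^M \<le> C"
      using C[of \<omega>] by (simp add: power_add mult_ac)
    then show ?thesis using p by (simp add: field_simps)
  qed
  then show ?thesis by blast
qed

lemma integrable_by_rapid_decay:
  fixes g :: "'a::euclidean_space \<Rightarrow> 'b::{banach, second_countable_topology}"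
  assumes "g \<in> borel_measurable lborel" "rapid_decay n"
    and "\<And>\<omega>. norm (g \<omega>) \<le> A * ((1 + (norm \<omega>)\<^sup>2)^K * n \<omega>)" "A \<ge> 0"
  shows "integrable lborel g"
proof -
  define M where "M = DIM('a) + 2"
  obtain C where C: "\<And>\<omega>::'a. (1 + (norm \<omega>)\<^sup>2)^K * n \<omega> \<le> C * inverse ((1 + (norm \<omega>)\<^sup>2)^M)"
    using rapid_decay_bound[OF assms(2)] by blast
  have integrable: "integrable lborel (\<lambda>\<omega>::'a. A * C * inverse ((1 + (norm \<omega>)\<^sup>2)^M))"
    unfolding M_def by (intro integrable_mult_right integrable_inverse_power_one_plus_norm_sq) simp
  have "norm (g \<omega>) \<le> norm (A * C * inverse ((1 + (norm \<omega>)\<^sup>2)^M))" for \<omega>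
  proof -
    have "norm (g \<omega>) \<le> A * (C * inverse ((1 + (norm \<omega>)\<^sup>2)^M))"
      using order_trans[OF assms(3) mult_left_mono[OF C assms(4)]] .
    also have "\<dots> \<le> norm (A * C * inverse ((1 + (norm \<omega>)\<^sup>2)^M))"
      unfolding real_norm_def mult.assoc by (rule abs_ge_self)
    finally show ?thesis .
  qed
  then show ?thesis
    by (intro Bochner_Integration.integrable_bound[OF integrable assms(1)] AE_I2)
qed

lemma jbr_ge1: "jbr x \<ge> 1"
  unfolding jbr_def by simp

lemma jbr_pos: "jbr x > 0"
  using jbr_ge1[of x] by simp

lemma jbr_sq: "(jbr x)\<^sup>2 = 1 + (norm x)\<^sup>2"
  unfolding jbr_def by (simp add: add_nonneg_nonneg)

lemma jbr_powr_shift: "jbr x powr (c + 2) = jbr x powr c * (1 + (norm x)\<^sup>2)"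
proof -
  have "jbr x powr (c + 2) = jbr x powr c * jbr x powr 2" by (simp add: powr_add)
  also have "jbr x powr 2 = (jbr x)\<^sup>2" using jbr_pos[of x] by (simp add: powr_numeral)
  finally show ?thesis by (simp add: jbr_sq)
qed

lemma jbr_powr_bound:
  assumes "norm x \<le> norm \<omega>" "\<bar>a\<bar> \<le> 2 * real K"
  shows "jbr x powr a \<le> (1 + (norm \<omega>)\<^sup>2)^K"
proof -
  have "jbr x powr a \<le> jbr x powr (2 * real K)"
    using assms(2) jbr_ge1[of x] by (intro powr_mono) auto
  also have "\<dots> = (jbr x ^ 2) ^ K"
  proof -
    have "jbr x powr (2 * real K) = jbr x powr (real (2 * K))" by simp
    also have "\<dots> = jbr x ^ (2 * K)" using jbr_pos[of x] by (rule powr_realpow)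
    also have "\<dots> = (jbr x ^ 2) ^ K" by (rule power_mult)
    finally show ?thesis .
  qed
  also have "\<dots> = (1 + (norm x)\<^sup>2) ^ K" by (simp add: jbr_sq)
  also have "\<dots> \<le> (1 + (norm \<omega>)\<^sup>2)^K"
    using assms(1) by (intro power_mono add_left_mono) (auto intro: power_mono)
  finally show ?thesis .
qed

lemma norm_le_one_plus_power2_norm: "norm x \<le> norm \<omega> \<Longrightarrow> norm x \<le> 1 + (norm \<omega>)\<^sup>2"
proof -
  assume "norm x \<le> norm \<omega>"
  moreover have "norm \<omega> \<le> 1 + (norm \<omega>)\<^sup>2"
  proof -
    have "0 \<le> (norm \<omega> - 1)\<^sup>2" by simp
    then have h: "norm \<omega> * 2 \<le> 1 + norm \<omega> * norm \<omega>" by (simp add: power2_eq_square algebra_simps)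
    show ?thesis unfolding power2_eq_square using h norm_ge_zero[of \<omega>] by linarith
  qed
  ultimately show ?thesis by linarith
qed

lemma jbr_powr_eq: "jbr x powr a = (1 + (norm x)\<^sup>2) powr (a / 2)"
proof -
  have p: "0 < 1 + (norm x)\<^sup>2" by (simp add: add_pos_nonneg)
  have "jbr x = (1 + (norm x)\<^sup>2) powr (1/2)" unfolding jbr_def using p by (simp add: powr_half_sqrt)
  then show ?thesis by (simp add: powr_powr)
qed

lemma has_vector_derivative_jbr_powr:
  fixes x e :: "'a::real_inner"
  shows "((\<lambda>h. jbr (x + h *\<^sub>R e) powr a) has_vector_derivative (a * (x \<bullet> e) * jbr x powr (a - 2))) (at 0)"
proof -
  have q: "((\<lambda>h. 1 + (norm (x + h *\<^sub>R e))\<^sup>2) has_real_derivative (2 * (x \<bullet> e))) (at 0)"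
  proof -
    have "((\<lambda>h. 1 + (x + h *\<^sub>R e) \<bullet> (x + h *\<^sub>R e)) has_real_derivative
        ((x + 0 *\<^sub>R e) \<bullet> (1 *\<^sub>R e) + (1 *\<^sub>R e) \<bullet> (x + 0 *\<^sub>R e))) (at 0)"
      unfolding has_field_derivative_def
      by (auto intro!: derivative_eq_intros simp: inner_add_left inner_add_right fun_eq_iff inner_commute algebra_simps)
    then show ?thesis by (simp add: power2_norm_eq_inner inner_commute)
  qed
  have p: "0 < 1 + (norm (x + 0 *\<^sub>R e))\<^sup>2" by (simp add: add_pos_nonneg)
  have D1: "((\<lambda>h. (1 + (norm (x + h *\<^sub>R e))\<^sup>2) powr (a / 2)) has_real_derivative
      ((a / 2) * (1 + (norm (x + 0 *\<^sub>R e))\<^sup>2) powr (a / 2 - 1) * (2 * (x \<bullet> e)))) (at 0)"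
    using DERIV_fun_powr[OF q, of "a/2"] p by simp
  have eq: "a * (x \<bullet> e) * jbr x powr (a - 2) = (a / 2) * (1 + (norm (x + 0 *\<^sub>R e))\<^sup>2) powr (a / 2 - 1) * (2 * (x \<bullet> e))"
    by (simp add: jbr_powr_eq diff_divide_distrib)
  show ?thesis unfolding eq unfolding jbr_powr_eq
    using D1 unfolding has_real_derivative_iff_has_vector_derivative .
qed

lemma has_vector_derivative_power2_cmod:
  fixes z :: "real \<Rightarrow> complex"
  assumes "(z has_vector_derivative z') (at 0)"
  shows "((\<lambda>h. (cmod (z h))\<^sup>2) has_vector_derivative (2 * Re (z' * cnj (z 0)))) (at 0)"
proof -
  have "((\<lambda>h. z h * cnj (z h)) has_vector_derivative (z 0 * cnj z' + z' * cnj (z 0))) (at 0)"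
    by (intro has_vector_derivative_mult assms has_vector_derivative_cnj)
  then have "((\<lambda>h. Re (z h * cnj (z h))) has_vector_derivative Re (z 0 * cnj z' + z' * cnj (z 0))) (at 0)"
    by (rule bounded_linear.has_vector_derivative[OF bounded_linear_Re])
  moreover have "(\<lambda>h. Re (z h * cnj (z h))) = (\<lambda>h. (cmod (z h))\<^sup>2)"
    by (rule ext) (metis Re_complex_of_real complex_norm_square)
  moreover have "Re (z 0 * cnj z' + z' * cnj (z 0)) = 2 * Re (z' * cnj (z 0))"
    by simp
  ultimately show ?thesis by simp
qed

lemma inverse_power_shift_le:
  fixes \<omega> E :: "'a::real_normed_vector"
  assumes "\<bar>s\<bar> \<le> 1" "norm E = 1"
  shows "inverse ((1 + (norm (\<omega> + s *\<^sub>R E))\<^sup>2)^M) \<le> 3^M * inverse ((1 + (norm \<omega>)\<^sup>2)^M)"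
proof -
  have "norm \<omega> \<le> norm (\<omega> + s *\<^sub>R E) + 1"
    using norm_triangle_ineq4[of "\<omega> + s *\<^sub>R E" "s *\<^sub>R E"] assms by simp
  then have "(norm \<omega>)\<^sup>2 \<le> (norm (\<omega> + s *\<^sub>R E) + 1)\<^sup>2" by (intro power_mono) auto
  also have "\<dots> \<le> 2 * (norm (\<omega> + s *\<^sub>R E))\<^sup>2 + 2"
    using sum_squares_ge_zero[of "norm (\<omega> + s *\<^sub>R E) - 1" 0]
    by (simp add: power2_eq_square algebra_simps)
  finally have h0: "(norm \<omega>)\<^sup>2 \<le> 2 * (norm (\<omega> + s *\<^sub>R E))\<^sup>2 + 2" .
  have h: "1 + (norm \<omega>)\<^sup>2 \<le> 3 * (1 + (norm (\<omega> + s *\<^sub>R E))\<^sup>2)"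
    unfolding distrib_left using h0 zero_le_power2[of "norm (\<omega> + s *\<^sub>R E)"] by linarith
  have "(1 + (norm \<omega>)\<^sup>2)^M \<le> (3 * (1 + (norm (\<omega> + s *\<^sub>R E))\<^sup>2))^M"
    by (intro power_mono h) (simp add: add_nonneg_nonneg)
  then have "(1 + (norm \<omega>)\<^sup>2)^M \<le> 3^M * (1 + (norm (\<omega> + s *\<^sub>R E))\<^sup>2)^M"
    by (simp only: power_mult_distrib)
  moreover have "0 < (1 + (norm \<omega>)\<^sup>2)^M" "0 < (1 + (norm (\<omega> + s *\<^sub>R E))\<^sup>2)^M"
    by (simp_all add: add_pos_nonneg)
  ultimately show ?thesis by (simp add: field_simps)
qed

lemma continuous_on_jbr: "continuous_on UNIV (jbr :: 'a::real_normed_vector \<Rightarrow> real)"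
  unfolding jbr_def[abs_def] by (intro continuous_intros)

lemma jbr_borel_measurable[measurable]: "(jbr :: 'a::euclidean_space \<Rightarrow> real) \<in> borel_measurable borel"
  by (rule borel_measurable_continuous_onI[OF continuous_on_jbr])

section \<open>Integrals of directional derivatives\<close>

lemma has_vector_derivative_at_iff_tendsto_quotient:
  fixes f :: "real \<Rightarrow> 'b::real_normed_vector"
  shows "(f has_vector_derivative D) (at x) \<longleftrightarrow> ((\<lambda>h. (f (x + h) - f x) /\<^sub>R h) \<longlongrightarrow> D) (at 0)"
proof -
  have bl: "bounded_linear (\<lambda>h::real. h *\<^sub>R D)" by (rule bounded_linear_scaleR_left)
  have eq: "\<forall>\<^sub>F h in at 0. norm (f (x + h) - f x - h *\<^sub>R D) / norm h = norm ((f (x + h) - f x) /\<^sub>R h - D)"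
  proof (rule eventually_mono[OF eventually_neq_at_within[of 0 0 UNIV]])
    fix h :: real assume "h \<noteq> 0"
    then have "(f (x + h) - f x) /\<^sub>R h - D = (1 / h) *\<^sub>R (f (x + h) - f x - h *\<^sub>R D)"
      by (simp add: algebra_simps divide_inverse_commute)
    then show "norm (f (x + h) - f x - h *\<^sub>R D) / norm h = norm ((f (x + h) - f x) /\<^sub>R h - D)"
      by (simp add: divide_inverse mult.commute)
  qed
  have "(f has_vector_derivative D) (at x) \<longleftrightarrow> ((\<lambda>h. norm (f (x + h) - f x - h *\<^sub>R D) / norm h) \<longlongrightarrow> 0) (at 0)"
    unfolding has_vector_derivative_def has_derivative_at using bl by simp
  also have "\<dots> \<longleftrightarrow> ((\<lambda>h. norm ((f (x + h) - f x) /\<^sub>R h - D)) \<longlongrightarrow> 0) (at 0)"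
    by (rule tendsto_cong[OF eq])
  also have "\<dots> \<longleftrightarrow> ((\<lambda>h. (f (x + h) - f x) /\<^sub>R h) \<longlongrightarrow> D) (at 0)"
    by (simp add: tendsto_norm_zero_iff LIM_zero_iff)
  finally show ?thesis .
qed

lemma tendsto_integral_at_0_dominated:
  fixes s :: "real \<Rightarrow> 'a \<Rightarrow> 'b::{banach, second_countable_topology}"
  assumes meas: "\<And>t. s t \<in> borel_measurable M" "f \<in> borel_measurable M"
    and w: "integrable M w"
    and lim: "\<And>x. ((\<lambda>t. s t x) \<longlongrightarrow> f x) (at 0)"
    and bnd: "\<And>t x. t \<noteq> 0 \<Longrightarrow> \<bar>t\<bar> \<le> 1 \<Longrightarrow> norm (s t x) \<le> w x"
  shows "((\<lambda>t. integral\<^sup>L M (s t)) \<longlongrightarrow> integral\<^sup>L M f) (at 0)"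
  unfolding tendsto_at_iff_sequentially[where s=UNIV]
proof (intro allI impI)
  fix X :: "nat \<Rightarrow> real" assume X0: "\<forall>i. X i \<in> UNIV - {0}" and X: "X \<longlonglongrightarrow> 0"
  then have "\<forall>\<^sub>F n in sequentially. norm (X n) < 1"
    using order_tendstoD(2)[OF tendsto_norm_zero[OF X], of 1] by simp
  then obtain N where N: "\<And>n. n \<ge> N \<Longrightarrow> \<bar>X n\<bar> < 1"
    by (auto simp: eventually_sequentially)
  have XA: "filterlim X (at 0) sequentially"
    using X X0 by (auto simp: filterlim_at eventually_sequentially)
  show "((\<lambda>t. integral\<^sup>L M (s t)) \<circ> X) \<longlonglongrightarrow> integral\<^sup>L M f"
    unfolding comp_def
  proof (rule LIMSEQ_offset[where k=N], rule integral_dominated_convergence[where w=w])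
    show "AE x in M. (\<lambda>n. s (X (n + N)) x) \<longlonglongrightarrow> f x"
    proof (intro AE_I2)
      fix x
      have "(\<lambda>n. s (X n) x) \<longlonglongrightarrow> f x"
        using filterlim_compose[OF lim XA] .
      then show "(\<lambda>n. s (X (n + N)) x) \<longlonglongrightarrow> f x"
        by (rule LIMSEQ_ignore_initial_segment)
    qed
    show "AE x in M. norm (s (X (n + N)) x) \<le> w x" for n
      using bnd[of "X (n + N)"] N[of "n + N"] X0 by auto
  qed (use meas w in auto)
qed

lemma integrable_lborel_translate:
  fixes g :: "'a::euclidean_space \<Rightarrow> 'b::{banach, second_countable_topology}"
  assumes "integrable lborel g"
  shows "integrable lborel (\<lambda>x. g (x + c))"
proof -
  have [measurable]: "g \<in> borel_measurable borel" using assms by auto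
  have "integrable (distr lborel borel ((+) c)) g" using assms by (simp add: lborel_distr_plus)
  then show ?thesis by (subst (asm) integrable_distr_eq) (auto simp: add.commute)
qed

lemma integral_lborel_translate:
  fixes g :: "'a::euclidean_space \<Rightarrow> 'b::{banach, second_countable_topology}"
  assumes "integrable lborel g"
  shows "integral\<^sup>L lborel (\<lambda>x. g (x + c)) = integral\<^sup>L lborel g"
proof -
  have [measurable]: "g \<in> borel_measurable borel" using assms by auto
  have "integral\<^sup>L lborel g = integral\<^sup>L (distr lborel borel ((+) c)) g" by (simp add: lborel_distr_plus)
  also have "\<dots> = integral\<^sup>L lborel (\<lambda>x. g (c + x))" by (rule integral_distr) auto
  finally show ?thesis by (simp add: add.commute)
qed

lemma norm_difference_quotient_le:
  fixes g :: "'a::real_normed_vector \<Rightarrow> 'b::real_normed_vector"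
  assumes der: "\<And>x. ((\<lambda>s. g (x + s *\<^sub>R e)) has_vector_derivative D x) (at 0)"
    and bnd: "\<And>s. \<bar>s\<bar> \<le> 1 \<Longrightarrow> norm (D (x + s *\<^sub>R e)) \<le> H"
    and t: "t \<noteq> 0" "\<bar>t\<bar> \<le> 1"
  shows "norm ((g (x + t *\<^sub>R e) - g x) /\<^sub>R t) \<le> H"
proof -
  have "norm (g (x + t *\<^sub>R e) - g (x + 0 *\<^sub>R e)) \<le> H * norm (t - 0)"
  proof (rule differentiable_bound[where S="{-1..1}" and f="\<lambda>s. g (x + s *\<^sub>R e)"
        and f'="\<lambda>s h. h *\<^sub>R D (x + s *\<^sub>R e)"])
    fix s :: real assume s: "s \<in> {-1..1}"
    have "((\<lambda>h. (g ((x + s *\<^sub>R e) + (0 + h) *\<^sub>R e) - g ((x + s *\<^sub>R e) + 0 *\<^sub>R e)) /\<^sub>R h)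
        \<longlongrightarrow> D (x + s *\<^sub>R e)) (at 0)"
      using der[of "x + s *\<^sub>R e"] unfolding has_vector_derivative_at_iff_tendsto_quotient by simp
    then have "((\<lambda>s'. g (x + s' *\<^sub>R e)) has_vector_derivative D (x + s *\<^sub>R e)) (at s)"
      unfolding has_vector_derivative_at_iff_tendsto_quotient by (simp add: scaleR_add_left add.assoc)
    then show "((\<lambda>s. g (x + s *\<^sub>R e)) has_derivative (\<lambda>h. h *\<^sub>R D (x + s *\<^sub>R e))) (at s within {-1..1})"
      unfolding has_vector_derivative_def by (rule has_derivative_at_withinI)
    have "onorm (\<lambda>h::real. h *\<^sub>R D (x + s *\<^sub>R e)) = norm (D (x + s *\<^sub>R e))"
      using onorm_scaleR_left[OF bounded_linear_ident] by (simp add: onorm_id[unfolded id_def])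
    then show "onorm (\<lambda>h. h *\<^sub>R D (x + s *\<^sub>R e)) \<le> H"
      using bnd s by auto
  qed (use t in auto)
  then have "norm (g (x + t *\<^sub>R e) - g x) \<le> H * \<bar>t\<bar>" by simp
  then show ?thesis unfolding norm_scaleR using t by (simp add: field_simps abs_inverse)
qed

text \<open>The integrals of the difference quotients vanish by translation invariance of Lebesgue
  measure, and dominated convergence passes to the limit.\<close>

lemma integral_directional_derivative_eq_0:
  fixes g :: "'a::euclidean_space \<Rightarrow> 'b::{banach, second_countable_topology}" and e :: 'a
  assumes gi: "integrable lborel g"
    and Dm: "D \<in> borel_measurable lborel"
    and H: "integrable lborel H"
    and der: "\<And>x. ((\<lambda>s. g (x + s *\<^sub>R e)) has_vector_derivative D x) (at 0)"
    and bnd: "\<And>x s. \<bar>s\<bar> \<le> 1 \<Longrightarrow> norm (D (x + s *\<^sub>R e)) \<le> H x"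
  shows "integral\<^sup>L lborel D = 0"
proof -
  define Q where "Q t x = (g (x + t *\<^sub>R e) - g x) /\<^sub>R t" for t x
  have [measurable]: "g \<in> borel_measurable borel" using gi by auto
  have Q0: "integral\<^sup>L lborel (Q t) = 0" for t
  proof -
    have "integral\<^sup>L lborel (Q t) = (integral\<^sup>L lborel (\<lambda>x. g (x + t *\<^sub>R e)) - integral\<^sup>L lborel g) /\<^sub>R t"
      unfolding Q_def by (simp add: integrable_lborel_translate[OF gi] gi)
    then show ?thesis by (simp add: integral_lborel_translate[OF gi])
  qed
  have "((\<lambda>t. integral\<^sup>L lborel (Q t)) \<longlongrightarrow> integral\<^sup>L lborel D) (at 0)"
  proof (rule tendsto_integral_at_0_dominated[OF _ Dm H])
    show "Q t \<in> borel_measurable lborel" for t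
      unfolding Q_def by measurable
    show "((\<lambda>t. Q t x) \<longlongrightarrow> D x) (at 0)" for x
      using der[of x] unfolding has_vector_derivative_at_iff_tendsto_quotient Q_def by simp
    show "norm (Q t x) \<le> H x" if "t \<noteq> 0" "\<bar>t\<bar> \<le> 1" for t x
      unfolding Q_def using der bnd that by (rule norm_difference_quotient_le)
  qed
  then have "((\<lambda>t::real. 0) \<longlongrightarrow> integral\<^sup>L lborel D) (at 0)" by (simp add: Q0)
  then show ?thesis by (rule LIM_const_eq[symmetric])
qed

lemma has_vector_derivative_dirderiv:
  fixes g :: "'a::real_normed_vector \<Rightarrow> 'b::real_normed_vector"
  assumes "g differentiable (at p)"
  shows "((\<lambda>h. g (p + h *\<^sub>R e)) has_vector_derivative dirderiv g e p) (at 0)"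
proof -
  obtain g' where g': "(g has_derivative g') (at p)" using assms by (auto simp: differentiable_def)
  have "((\<lambda>h::real. p + h *\<^sub>R e) has_derivative (\<lambda>h. h *\<^sub>R e)) (at 0)"
    by (auto intro!: derivative_eq_intros)
  moreover have "(g has_derivative g') (at (p + 0 *\<^sub>R e))" using g' by simp
  ultimately have "((\<lambda>h. g (p + h *\<^sub>R e)) has_derivative (\<lambda>h. g' (h *\<^sub>R e))) (at 0)"
    by (rule has_derivative_compose[of "\<lambda>h. p + h *\<^sub>R e"])
  moreover have "(\<lambda>h. g' (h *\<^sub>R e)) = (\<lambda>h. h *\<^sub>R g' e)"
    using has_derivative_bounded_linear[OF g'] by (simp add: linear_simps(5) bounded_linear.linear linear_scale)
  ultimately have *: "((\<lambda>h. g (p + h *\<^sub>R e)) has_vector_derivative g' e) (at 0)"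
    by (simp add: has_vector_derivative_def)
  then have "dirderiv g e p = g' e" unfolding dirderiv_def by (rule vector_derivative_at)
  with * show ?thesis by simp
qed

lemma has_vector_derivative_eq_0_outside:
  fixes g :: "'a::real_normed_vector \<Rightarrow> 'b::real_normed_vector"
  assumes K: "closed K" and z: "\<And>x. x \<notin> K \<Longrightarrow> g x = 0" and p: "p \<notin> K"
    and d: "((\<lambda>h. g (p + h *\<^sub>R e)) has_vector_derivative D) (at 0)"
  shows "D = 0"
proof -
  have "open (- K)" using K by auto
  then obtain r where r: "r > 0" "ball p r \<subseteq> - K" using p by (auto simp: open_contains_ball)
  have ev: "\<forall>\<^sub>F h in at (0::real). (g (p + (0 + h) *\<^sub>R e) - g (p + 0 *\<^sub>R e)) /\<^sub>R h = 0"
  proof -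
    have "\<forall>\<^sub>F h in at (0::real). norm (h *\<^sub>R e) < r"
    proof -
      have "((\<lambda>h::real. h *\<^sub>R e) \<longlongrightarrow> 0 *\<^sub>R e) (at 0)" by (intro tendsto_intros)
      then have "((\<lambda>h::real. norm (h *\<^sub>R e)) \<longlongrightarrow> 0) (at 0)" using tendsto_norm_zero by fastforce
      then show ?thesis using r(1) by (rule order_tendstoD)
    qed
    then show ?thesis
    proof (rule eventually_mono)
      fix h :: real assume "norm (h *\<^sub>R e) < r"
      then have "p + h *\<^sub>R e \<in> ball p r" by (simp add: dist_norm)
      then have "g (p + h *\<^sub>R e) = 0" using r z by auto
      then show "(g (p + (0 + h) *\<^sub>R e) - g (p + 0 *\<^sub>R e)) /\<^sub>R h = 0" using z p by simp
    qed
  qed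
  from d have "((\<lambda>h. (g (p + (0 + h) *\<^sub>R e) - g (p + 0 *\<^sub>R e)) /\<^sub>R h) \<longlongrightarrow> D) (at 0)"
    unfolding has_vector_derivative_at_iff_tendsto_quotient .
  then have "((\<lambda>h::real. 0) \<longlongrightarrow> D) (at 0)" using ev by (rule Lim_transform_eventually)
  then show ?thesis by (rule LIM_const_eq[symmetric])
qed

section \<open>Fourier transform of compactly supported functions\<close>

lemma fst_borel_measurable[measurable]: "(fst :: ('a::second_countable_topology \<times> 'b::second_countable_topology) \<Rightarrow> 'a) \<in> borel_measurable borel"
  by (rule borel_measurable_continuous_onI[OF continuous_on_fst[OF continuous_on_id]])

lemma snd_borel_measurable[measurable]: "(snd :: ('a::second_countable_topology \<times> 'b::second_countable_topology) \<Rightarrow> 'b) \<in> borel_measurable borel"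
  by (rule borel_measurable_continuous_onI[OF continuous_on_snd[OF continuous_on_id]])

lemma cnj_borel_measurable[measurable]: "cnj \<in> borel_measurable borel"
  by (rule borel_measurable_continuous_onI) (intro continuous_intros)

lemma vec_nth_borel_measurable[measurable]: "(\<lambda>x::real^'n. x $ j) \<in> borel_measurable borel"
  by (rule borel_measurable_continuous_onI) (intro continuous_intros)

lemma integrable_continuous_compact_support:
  fixes g :: "'a::euclidean_space \<Rightarrow> 'b::{banach, second_countable_topology}"
  assumes "continuous_on UNIV g" "compact K" "\<And>x. x \<notin> K \<Longrightarrow> g x = 0"
  shows "integrable lborel g"
proof -
  have "integrable lborel (\<lambda>x. indicator K x *\<^sub>R g x)"
    by (rule borel_integrable_compact[OF assms(2) continuous_on_subset[OF assms(1) subset_UNIV]])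
  moreover have "(\<lambda>x. indicator K x *\<^sub>R g x) = g"
    using assms(3) by (auto simp: indicator_def)
  ultimately show ?thesis by simp
qed

lemma bounded_continuous_compact_support:
  fixes g :: "'a::euclidean_space \<Rightarrow> 'b::real_normed_vector"
  assumes "continuous_on UNIV g" "compact K" "\<And>x. x \<notin> K \<Longrightarrow> g x = 0"
  shows "\<exists>B. \<forall>x. norm (g x) \<le> B"
proof -
  have "compact (g ` K)" using assms by (meson compact_continuous_image continuous_on_subset subset_UNIV)
  then obtain B where B: "\<And>y. y \<in> g ` K \<Longrightarrow> norm y \<le> B"
    by (meson compact_imp_bounded bounded_iff)
  have "norm (g x) \<le> max B 0" for x
    using B[of "g x"] assms(3)[of x] by (cases "x \<in> K") auto
  then show ?thesis by blast
qed

lemma has_vector_derivative_cis_linear: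
  "((\<lambda>s. cis (a - s * b)) has_vector_derivative (- \<i> * complex_of_real b * cis (a - t * b))) (at t)"
proof -
  have "((\<lambda>z. exp (\<i> * (of_real a - z * of_real b))) has_field_derivative
        (exp (\<i> * (of_real a - of_real t * of_real b)) * (- \<i> * of_real b))) (at (of_real t))"
    by (auto intro!: derivative_eq_intros)
  then have "((\<lambda>s. exp (\<i> * (of_real a - of_real s * of_real b))) has_vector_derivative
        (exp (\<i> * (of_real a - of_real t * of_real b)) * (- \<i> * of_real b))) (at t)"
    by (rule has_vector_derivative_real_field)
  then show ?thesis by (simp add: cis_conv_exp mult_ac)
qed

lemma norm_FT_le: "norm (FT g \<omega>) \<le> (\<integral>p. norm (g p) \<partial>lborel)"
proof -
  have "norm (FT g \<omega>) \<le> (\<integral>p. norm (cis (- (p \<bullet> \<omega>)) * g p) \<partial>lborel)"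
    unfolding FT_def by (rule integral_norm_bound)
  also have "\<dots> = (\<integral>p. norm (g p) \<partial>lborel)" by (simp add: norm_mult)
  finally show ?thesis .
qed

lemma sets_lborel_pair: "sets (lborel \<Otimes>\<^sub>M lborel) = sets (borel :: ('a::euclidean_space \<times> 'b::euclidean_space) measure)"
  by (metis borel_prod sets_lborel sets_pair_measure_cong)

lemma FT_borel_measurable:
  fixes g :: "'d::finite pt \<Rightarrow> complex"
  assumes "continuous_on UNIV g"
  shows "FT g \<in> borel_measurable lborel"
proof -
  have c: "continuous_on UNIV (\<lambda>(\<omega>::'d pt, p::'d pt). cis (- (p \<bullet> \<omega>)) * g p)"
  proof -
    have "continuous_on UNIV (\<lambda>x::('d pt \<times> 'd pt). g (snd x))"
      by (rule continuous_on_compose2[OF assms continuous_on_snd]) auto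
    then show ?thesis by (auto intro!: continuous_intros simp: split_beta)
  qed
  have "(\<lambda>(\<omega>::'d pt, p::'d pt). cis (- (p \<bullet> \<omega>)) * g p) \<in> borel_measurable (lborel \<Otimes>\<^sub>M lborel)"
    unfolding measurable_cong_sets[OF sets_lborel_pair refl]
    by (rule borel_measurable_continuous_onI[OF c])
  then show ?thesis unfolding FT_def[abs_def]
    by (rule lborel.borel_measurable_lebesgue_integral)
qed

lemma translate_majorant_compact_support:
  fixes \<phi> :: "'a::euclidean_space \<Rightarrow> 'b::real_normed_vector"
  assumes \<phi>c: "continuous_on UNIV \<phi>" and K: "compact K" and z: "\<And>x. x \<notin> K \<Longrightarrow> \<phi> x = 0"
  obtains H :: "'a \<Rightarrow> real"
    where "integrable lborel H" "\<And>x s. \<bar>s\<bar> \<le> 1 \<Longrightarrow> norm (\<phi> (x + s *\<^sub>R e)) \<le> H x"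
proof -
  obtain B where B: "\<And>x. norm (\<phi> x) \<le> B" using bounded_continuous_compact_support[OF \<phi>c K z] by auto
  obtain R where R: "K \<subseteq> cball 0 R"
    using compact_imp_bounded[OF K] by (meson bounded_subset_ballD ball_subset_cball order_trans)
  define H where "H x = indicator (cball 0 (R + norm e)) x *\<^sub>R B" for x :: 'a
  show ?thesis
  proof (rule that[of H])
    show "integrable lborel H" unfolding H_def
      by (rule integrable_indicator) (use emeasure_bounded_finite[of "cball (0::'a) (R + norm e)"] in auto)
    show "norm (\<phi> (x + s *\<^sub>R e)) \<le> H x" if s: "\<bar>s\<bar> \<le> 1" for x s
    proof (cases "x + s *\<^sub>R e \<in> K")
      case True
      then have "norm (x + s *\<^sub>R e) \<le> R" using R by auto
      moreover have "norm (s *\<^sub>R e) \<le> norm e" using s by (simp add: mult_left_le_one_le)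
      ultimately have "norm x \<le> R + norm e" using norm_triangle_ineq4[of "x + s *\<^sub>R e" "s *\<^sub>R e"] by simp
      then show ?thesis unfolding H_def using B by simp
    next
      case False
      have "0 \<le> B" using order_trans[OF norm_ge_zero B] .
      then show ?thesis unfolding H_def using z False by (simp add: indicator_def)
    qed
  qed
qed

lemma FT_directional_derivative:
  fixes g Dg :: "'d::finite pt \<Rightarrow> complex"
  assumes gc: "continuous_on UNIV g" and Dc: "continuous_on UNIV Dg"
    and K: "compact K" and zg: "\<And>x. x \<notin> K \<Longrightarrow> g x = 0" and zD: "\<And>x. x \<notin> K \<Longrightarrow> Dg x = 0"
    and der: "\<And>x. ((\<lambda>s. g (x + s *\<^sub>R e)) has_vector_derivative Dg x) (at 0)"
  shows "FT Dg \<omega> = \<i> * of_real (e \<bullet> \<omega>) * FT g \<omega>"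
proof -
  define h where "h x = cis (- (x \<bullet> \<omega>)) * g x" for x
  define Dh where "Dh x = cis (- (x \<bullet> \<omega>)) * Dg x - \<i> * of_real (e \<bullet> \<omega>) * (cis (- (x \<bullet> \<omega>)) * g x)" for x
  have cc: "continuous_on UNIV (\<lambda>x::'d pt. cis (- (x \<bullet> \<omega>)))"
    by (auto intro!: continuous_intros)
  have i1: "integrable lborel (\<lambda>x. cis (- (x \<bullet> \<omega>)) * g x)"
    by (rule integrable_continuous_compact_support[OF _ K]) (use zg in \<open>auto intro!: continuous_intros cc gc\<close>)
  have i2: "integrable lborel (\<lambda>x. cis (- (x \<bullet> \<omega>)) * Dg x)"
    by (rule integrable_continuous_compact_support[OF _ K]) (use zD in \<open>auto intro!: continuous_intros cc Dc\<close>)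
  have "continuous_on UNIV Dh" unfolding Dh_def by (intro continuous_intros cc gc Dc)
  moreover have "Dh x = 0" if "x \<notin> K" for x unfolding Dh_def using zg zD that by simp
  ultimately obtain H where H: "integrable lborel H" "\<And>x s. \<bar>s\<bar> \<le> 1 \<Longrightarrow> norm (Dh (x + s *\<^sub>R e)) \<le> H x"
    using translate_majorant_compact_support[OF _ K, of Dh e] by blast
  have "0 = integral\<^sup>L lborel Dh"
  proof (rule integral_directional_derivative_eq_0[of h _ H e, symmetric, OF _ _ H(1) _ H(2)])
    show "integrable lborel h" using i1 unfolding h_def .
    show "Dh \<in> borel_measurable lborel" unfolding Dh_def
      using i1 i2 by measurable
    show "((\<lambda>s. h (x + s *\<^sub>R e)) has_vector_derivative Dh x) (at 0)" for x
    proof -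
      have c: "((\<lambda>s. cis (- (x \<bullet> \<omega>) - s * (e \<bullet> \<omega>))) has_vector_derivative
          (- \<i> * complex_of_real (e \<bullet> \<omega>) * cis (- (x \<bullet> \<omega>) - 0 * (e \<bullet> \<omega>)))) (at 0)"
        by (rule has_vector_derivative_cis_linear)
      have "((\<lambda>s. cis (- (x \<bullet> \<omega>) - s * (e \<bullet> \<omega>)) * g (x + s *\<^sub>R e)) has_vector_derivative
          (cis (- (x \<bullet> \<omega>) - 0 * (e \<bullet> \<omega>)) * Dg x
           + (- \<i> * complex_of_real (e \<bullet> \<omega>) * cis (- (x \<bullet> \<omega>) - 0 * (e \<bullet> \<omega>))) * g (x + 0 *\<^sub>R e))) (at 0)"
        by (rule has_vector_derivative_mult[OF c der])
      then show ?thesis unfolding h_def Dh_def by (simp add: inner_add_left algebra_simps)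
    qed
  qed
  also have "integral\<^sup>L lborel Dh = FT Dg \<omega> - \<i> * of_real (e \<bullet> \<omega>) * FT g \<omega>"
    unfolding Dh_def FT_def using i1 i2 by simp
  finally show ?thesis by simp
qed

lemma has_vector_derivative_complex_of_real:
  fixes g :: "real \<Rightarrow> real"
  assumes "(g has_vector_derivative D) (at t)"
  shows "((\<lambda>h. complex_of_real (g h)) has_vector_derivative complex_of_real D) (at t)"
  using assms by (intro has_vector_derivative_of_real) (simp add: has_real_derivative_iff_has_vector_derivative)

lemma norm_cis_difference_quotient_le:
  assumes "h \<noteq> 0"
  shows "cmod ((cis (- (h * a)) - 1) / of_real h) \<le> \<bar>a\<bar>"
proof -
  have "cmod (cis t - 1) = 2 * \<bar>sin (t / 2)\<bar>" for t by (simp add: cis_conv_exp dist_exp_i_1)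
  then have "cmod (cis (- (h * a)) - 1) = 2 * \<bar>sin (- (h * a) / 2)\<bar>" .
  also have "\<dots> \<le> 2 * \<bar>- (h * a) / 2\<bar>" using abs_sin_x_le_abs_x[of "- (h * a) / 2"] by simp
  finally have "cmod (cis (- (h * a)) - 1) \<le> \<bar>h\<bar> * \<bar>a\<bar>" by (simp add: abs_mult)
  then show ?thesis using assms by (simp add: norm_divide divide_le_eq mult.commute)
qed

lemma tendsto_cis_difference_quotient:
  "((\<lambda>h. (cis (- (h * a)) - 1) / of_real h) \<longlongrightarrow> - \<i> * complex_of_real a) (at 0)"
proof -
  have "((\<lambda>h. cis (0 - h * a)) has_vector_derivative (- \<i> * complex_of_real a * cis (0 - 0 * a))) (at 0)"
    by (rule has_vector_derivative_cis_linear)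
  then have "((\<lambda>h. (cis (0 - (0 + h) * a) - cis (0 - 0 * a)) /\<^sub>R h) \<longlongrightarrow> - \<i> * complex_of_real a) (at 0)"
    unfolding has_vector_derivative_at_iff_tendsto_quotient by simp
  then show ?thesis by (simp add: scaleR_conv_of_real divide_inverse mult_ac)
qed

lemma FT_difference_quotient:
  fixes g :: "'d::finite pt \<Rightarrow> complex"
  assumes "\<And>\<omega>. integrable lborel (\<lambda>p. cis (- (p \<bullet> \<omega>)) * g p)"
  shows "(FT g (\<omega> + h *\<^sub>R E) - FT g \<omega>) /\<^sub>R h
    = (\<integral>p. cis (- (p \<bullet> \<omega>)) * g p * ((cis (- (h * (p \<bullet> E))) - 1) / of_real h) \<partial>lborel)"
proof -
  have cis_diff: "\<And>a b. cis (a - b) = cis a * cis (- b)" by (simp add: cis_mult)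
  have shifted: "FT g (\<omega> + h *\<^sub>R E) = (\<integral>p. cis (- (p \<bullet> \<omega>)) * g p * cis (- (h * (p \<bullet> E))) \<partial>lborel)"
    unfolding FT_def by (intro Bochner_Integration.integral_cong) (auto simp: inner_add_right cis_diff algebra_simps)
  have "integrable lborel (\<lambda>p. cis (- (p \<bullet> \<omega>)) * g p * cis (- (h * (p \<bullet> E))))"
    using assms[of "\<omega> + h *\<^sub>R E"] by (simp add: inner_add_right cis_diff algebra_simps)
  then have "FT g (\<omega> + h *\<^sub>R E) - FT g \<omega> = (\<integral>p. cis (- (p \<bullet> \<omega>)) * g p * (cis (- (h * (p \<bullet> E))) - 1) \<partial>lborel)"
    using shifted assms[of \<omega>] unfolding FT_def by (simp add: algebra_simps)
  then show ?thesis
    by (simp add: scaleR_conv_of_real divide_inverse mult_ac flip: integral_mult_right_zero)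
qed

lemma FT_has_directional_derivative:
  fixes g :: "'d::finite pt \<Rightarrow> complex"
  assumes gc: "continuous_on UNIV g" and K: "compact K" and z: "\<And>x. x \<notin> K \<Longrightarrow> g x = 0"
  shows "((\<lambda>h. FT g (\<omega> + h *\<^sub>R E)) has_vector_derivative (- \<i> * FT (\<lambda>p. of_real (p \<bullet> E) * g p) \<omega>)) (at 0)"
proof -
  define s where "s h p = cis (- (p \<bullet> \<omega>)) * g p * ((cis (- (h * (p \<bullet> E))) - 1) / of_real h)" for h p
  define L where "L p = cis (- (p \<bullet> \<omega>)) * g p * (- \<i> * of_real (p \<bullet> E))" for p
  have "((\<lambda>h. integral\<^sup>L lborel (s h)) \<longlongrightarrow> integral\<^sup>L lborel L) (at 0)"
  proof (rule tendsto_integral_at_0_dominated[where w="\<lambda>p. \<bar>p \<bullet> E\<bar> * norm (g p)"])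
    show "s h \<in> borel_measurable lborel" for h unfolding s_def divide_inverse measurable_lborel2
      by (intro borel_measurable_continuous_onI continuous_intros gc)
    show "L \<in> borel_measurable lborel" unfolding L_def measurable_lborel2
      by (intro borel_measurable_continuous_onI continuous_intros gc)
    show "integrable lborel (\<lambda>p. \<bar>p \<bullet> E\<bar> * norm (g p))"
      by (rule integrable_continuous_compact_support[OF _ K]) (use z in \<open>auto intro!: continuous_intros gc\<close>)
    show "((\<lambda>h. s h p) \<longlongrightarrow> L p) (at 0)" for p
      unfolding s_def L_def by (intro tendsto_intros tendsto_cis_difference_quotient)
    show "norm (s h p) \<le> \<bar>p \<bullet> E\<bar> * norm (g p)" if "h \<noteq> 0" for h p
    proof -
      have "norm (s h p) = norm (g p) * cmod ((cis (- (h * (p \<bullet> E))) - 1) / of_real h)"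
        unfolding s_def by (simp add: norm_mult norm_divide)
      also have "\<dots> \<le> norm (g p) * \<bar>p \<bullet> E\<bar>"
        by (rule mult_left_mono[OF norm_cis_difference_quotient_le[OF that]]) simp
      finally show ?thesis by (simp only: mult.commute)
    qed
  qed
  moreover have "integral\<^sup>L lborel L = - \<i> * FT (\<lambda>p. of_real (p \<bullet> E) * g p) \<omega>"
    unfolding L_def FT_def by (simp add: mult_ac flip: integral_mult_right_zero)
  moreover have "(FT g (\<omega> + h *\<^sub>R E) - FT g \<omega>) /\<^sub>R h = integral\<^sup>L lborel (s h)" for h
    unfolding s_def
    by (rule FT_difference_quotient, rule integrable_continuous_compact_support[OF _ K])
      (use z in \<open>auto intro!: continuous_intros gc\<close>)
  ultimately show ?thesis unfolding has_vector_derivative_at_iff_tendsto_quotient by simp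
qed

section \<open>Test functions and the decay of their Fourier transforms\<close>

definition eta_axis :: "'d::finite \<Rightarrow> 'd pt" where "eta_axis j = (0, 0, axis j 1)"

lemma inner_eta_axis: "p \<bullet> eta_axis j = snd (snd p) $ j"
  by (cases p) (auto simp: eta_axis_def inner_axis)

lemma eta_axis_in_Basis: "eta_axis j \<in> Basis"
  unfolding eta_axis_def by (auto simp: Basis_prod_def cart_basis_def)

lemma norm_eta_axis: "norm (eta_axis j) = 1"
  unfolding eta_axis_def by (simp add: norm_Pair)

locale test_function =
  fixes f :: "'a::euclidean_space \<Rightarrow> real"
  assumes f: "smooth_compact_support f"
begin

definition fsupp where "fsupp = closure {p. f p \<noteq> 0}"

lemma fsupp: "compact fsupp" "closed fsupp" using f unfolding smooth_compact_support_def fsupp_def by auto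

lemma iter_pd_differentiable: "set es \<subseteq> Basis \<Longrightarrow> iter_pd es f differentiable (at p)"
  using f unfolding smooth_compact_support_def smooth_def by auto

lemma iter_pd_isCont: "set es \<subseteq> Basis \<Longrightarrow> isCont (iter_pd es f) p"
  using iter_pd_differentiable by (rule differentiable_imp_continuous_within)

lemma iter_pd_eq_0_outside: "set es \<subseteq> Basis \<Longrightarrow> p \<notin> fsupp \<Longrightarrow> iter_pd es f p = 0"
proof (induction es arbitrary: p)
  case Nil
  then show ?case unfolding fsupp_def using closure_subset[of "{p. f p \<noteq> 0}"] by auto
next
  case (Cons e es)
  then have es: "set es \<subseteq> Basis" by auto
  show ?case
    using has_vector_derivative_eq_0_outside[OF fsupp(2) Cons.IH[OF es] Cons.prems(2) has_vector_derivative_dirderiv[OF iter_pd_differentiable[OF es]]]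
    by simp
qed

end

locale test_function_pt = test_function f for f :: "'d::finite pt \<Rightarrow> real"
begin

text \<open>For \<open>E = eta_axis j\<close> and \<open>es = []\<close>, \<open>cmoment E es\<close> is \<open>v\<^sub>j f\<close>, whose transform is
  \<open>vfhat f j\<close>.\<close>

definition cpartial where "cpartial es p = complex_of_real (iter_pd es f p)"

definition cmoment where "cmoment E es p = complex_of_real ((p \<bullet> E) * iter_pd es f p)"

lemma cpartial_continuous: "set es \<subseteq> Basis \<Longrightarrow> continuous_on UNIV (cpartial es)"
  unfolding cpartial_def using iter_pd_isCont by (auto intro!: continuous_intros continuous_at_imp_continuous_on)

lemma cmoment_continuous: "set es \<subseteq> Basis \<Longrightarrow> continuous_on UNIV (cmoment E es)"
proof -
  assume es: "set es \<subseteq> Basis"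
  have "continuous_on UNIV (iter_pd es f)" using iter_pd_isCont[OF es] by (simp add: continuous_at_imp_continuous_on)
  then show ?thesis unfolding cmoment_def by (auto intro!: continuous_intros)
qed

lemma cpartial_eq_0_outside: "set es \<subseteq> Basis \<Longrightarrow> x \<notin> fsupp \<Longrightarrow> cpartial es x = 0"
  unfolding cpartial_def using iter_pd_eq_0_outside by simp

lemma cmoment_eq_0_outside: "set es \<subseteq> Basis \<Longrightarrow> x \<notin> fsupp \<Longrightarrow> cmoment E es x = 0"
  unfolding cmoment_def using iter_pd_eq_0_outside by simp

lemma has_vector_derivative_iter_pd: "set es \<subseteq> Basis \<Longrightarrow> ((\<lambda>h. iter_pd es f (p + h *\<^sub>R e)) has_vector_derivative iter_pd (e # es) f p) (at 0)"
  using has_vector_derivative_dirderiv[OF iter_pd_differentiable] by simp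

lemma FT_cpartial_Cons:
  assumes "set (e # es) \<subseteq> Basis"
  shows "FT (cpartial (e # es)) \<omega> = \<i> * of_real (e \<bullet> \<omega>) * FT (cpartial es) \<omega>"
proof -
  have es: "set es \<subseteq> Basis" using assms by auto
  show ?thesis
  proof (rule FT_directional_derivative[OF cpartial_continuous[OF es] cpartial_continuous[OF assms] fsupp(1) cpartial_eq_0_outside[OF es] cpartial_eq_0_outside[OF assms]])
    show "((\<lambda>s. cpartial es (x + s *\<^sub>R e)) has_vector_derivative cpartial (e # es) x) (at 0)" for x
      unfolding cpartial_def by (rule has_vector_derivative_complex_of_real[OF has_vector_derivative_iter_pd[OF es]])
  qed
qed

lemma FT_cmoment_Cons:
  assumes "set (e # es) \<subseteq> Basis"
  shows "of_real (e \<bullet> E) * FT (cpartial es) \<omega> + FT (cmoment E (e # es)) \<omega> = \<i> * of_real (e \<bullet> \<omega>) * FT (cmoment E es) \<omega>"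
proof -
  have es: "set es \<subseteq> Basis" using assms by auto
  define Dg where "Dg p = of_real (e \<bullet> E) * cpartial es p + cmoment E (e # es) p" for p
  have Dc: "continuous_on UNIV Dg" unfolding Dg_def
    by (intro continuous_intros cpartial_continuous[OF es] cmoment_continuous[OF assms])
  have "FT Dg \<omega> = \<i> * of_real (e \<bullet> \<omega>) * FT (cmoment E es) \<omega>"
  proof (rule FT_directional_derivative[OF cmoment_continuous[OF es] Dc fsupp(1) cmoment_eq_0_outside[OF es]])
    show "Dg x = 0" if "x \<notin> fsupp" for x unfolding Dg_def using cpartial_eq_0_outside[OF es that] cmoment_eq_0_outside[OF assms that] by simp
    show "((\<lambda>s. cmoment E es (x + s *\<^sub>R e)) has_vector_derivative Dg x) (at 0)" for x
    proof -
      have l: "((\<lambda>h. (x + h *\<^sub>R e) \<bullet> E) has_vector_derivative (e \<bullet> E)) (at 0)"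
        unfolding has_vector_derivative_def
        by (auto intro!: derivative_eq_intros simp: inner_add_left)
      have "((\<lambda>h. ((x + h *\<^sub>R e) \<bullet> E) * iter_pd es f (x + h *\<^sub>R e)) has_vector_derivative
          ((x + 0 *\<^sub>R e) \<bullet> E) * iter_pd (e # es) f x + (e \<bullet> E) * iter_pd es f (x + 0 *\<^sub>R e)) (at 0)"
        by (rule has_vector_derivative_mult[OF l has_vector_derivative_iter_pd[OF es]])
      then have "((\<lambda>h. complex_of_real (((x + h *\<^sub>R e) \<bullet> E) * iter_pd es f (x + h *\<^sub>R e))) has_vector_derivative
          complex_of_real (((x + 0 *\<^sub>R e) \<bullet> E) * iter_pd (e # es) f x + (e \<bullet> E) * iter_pd es f (x + 0 *\<^sub>R e))) (at 0)"
        by (rule has_vector_derivative_complex_of_real)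
      moreover have "complex_of_real (((x + 0 *\<^sub>R e) \<bullet> E) * iter_pd (e # es) f x + (e \<bullet> E) * iter_pd es f (x + 0 *\<^sub>R e)) = Dg x"
        unfolding Dg_def cpartial_def cmoment_def by simp
      ultimately show ?thesis unfolding cmoment_def by simp
    qed
  qed
  moreover have "FT Dg \<omega> = of_real (e \<bullet> E) * FT (cpartial es) \<omega> + FT (cmoment E (e # es)) \<omega>"
  proof -
    have i1: "integrable lborel (\<lambda>x. cis (- (x \<bullet> \<omega>)) * cpartial es x)"
      by (rule integrable_continuous_compact_support[OF _ fsupp(1)]) (use cpartial_eq_0_outside[OF es] in \<open>auto intro!: continuous_intros cpartial_continuous[OF es]\<close>)
    have i2: "integrable lborel (\<lambda>x. cis (- (x \<bullet> \<omega>)) * cmoment E (e # es) x)"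
      by (rule integrable_continuous_compact_support[OF _ fsupp(1)]) (use cmoment_eq_0_outside[OF assms] in \<open>auto intro!: continuous_intros cmoment_continuous[OF assms]\<close>)
    show ?thesis unfolding FT_def Dg_def using i1 i2 by (simp add: algebra_simps)
  qed
  ultimately show ?thesis by simp
qed


lemma norm_FT_cpartial_twice: "set (b # es) \<subseteq> Basis \<Longrightarrow> norm (FT (cpartial (b # b # es)) \<omega>) = (\<omega> \<bullet> b)\<^sup>2 * norm (FT (cpartial es) \<omega>)"
proof -
  assume a: "set (b # es) \<subseteq> Basis"
  then have a2: "set (b # b # es) \<subseteq> Basis" by auto
  show ?thesis
    unfolding FT_cpartial_Cons[OF a2] FT_cpartial_Cons[OF a] by (simp add: norm_mult inner_commute power2_eq_square)
qed

text \<open>Induction on the power of \<open>1 + |\<omega>|\<^sup>2 = 1 + \<Sum>\<^sub>b (\<omega> \<bullet> b)\<^sup>2\<close>: each factor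
  \<open>(\<omega> \<bullet> b)\<^sup>2\<close> is traded for two more derivatives in direction \<open>b\<close>, which is why the
  claims quantify over all lists of directions.\<close>

lemma FT_cpartial_decay: "\<forall>es. set es \<subseteq> Basis \<longrightarrow> (\<exists>C. \<forall>\<omega>. (1 + (norm \<omega>)\<^sup>2)^N * norm (FT (cpartial es) \<omega>) \<le> C)"
proof (induction N)
  case 0
  show ?case
  proof (intro allI impI)
    fix es :: "'d pt list"
    show "\<exists>C. \<forall>\<omega>. (1 + (norm \<omega>)\<^sup>2)^0 * norm (FT (cpartial es) \<omega>) \<le> C"
      using norm_FT_le[of "cpartial es"] by (intro exI[of _ "LBINT p. norm (cpartial es p)"] allI) simp
  qed
next
  case (Suc N)
  show ?case
  proof (intro allI impI)
    fix es :: "'d pt list" assume es: "set es \<subseteq> Basis"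
    obtain C0 where C0: "\<And>\<omega>. (1 + (norm \<omega>)\<^sup>2)^N * norm (FT (cpartial es) \<omega>) \<le> C0" using Suc es by blast
    have "\<forall>b\<in>Basis. \<exists>C. \<forall>\<omega>. (1 + (norm \<omega>)\<^sup>2)^N * norm (FT (cpartial (b # b # es)) \<omega>) \<le> C"
      using Suc es by auto
    then obtain c where c: "\<And>b \<omega>. b \<in> Basis \<Longrightarrow> (1 + (norm \<omega>)\<^sup>2)^N * norm (FT (cpartial (b # b # es)) \<omega>) \<le> c b"
      by metis
    have "(1 + (norm \<omega>)\<^sup>2)^Suc N * norm (FT (cpartial es) \<omega>) \<le> C0 + (\<Sum>b\<in>Basis. c b)" for \<omega>
    proof (rule weight_Suc_bound[where n="\<lambda>\<omega>. norm (FT (cpartial es) \<omega>)", OF C0])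
      fix b \<omega> assume b: "(b::'d pt) \<in> Basis"
      then show "(1 + (norm \<omega>)\<^sup>2)^N * ((\<omega> \<bullet> b)\<^sup>2 * norm (FT (cpartial es) \<omega>)) \<le> c b"
        using c[OF b, of \<omega>] norm_FT_cpartial_twice[of b es \<omega>] es by simp
    qed
    then show "\<exists>C. \<forall>\<omega>. (1 + (norm \<omega>)\<^sup>2)^Suc N * norm (FT (cpartial es) \<omega>) \<le> C" by blast
  qed
qed

lemma norm_FT_cmoment_twice_le: "set (b # es) \<subseteq> Basis \<Longrightarrow>
   (\<omega> \<bullet> b)\<^sup>2 * norm (FT (cmoment E es) \<omega>) \<le> 2 * \<bar>b \<bullet> E\<bar> * norm (FT (cpartial (b # es)) \<omega>) + norm (FT (cmoment E (b # b # es)) \<omega>)"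
proof -
  assume a: "set (b # es) \<subseteq> Basis"
  then have a2: "set (b # b # es) \<subseteq> Basis" by auto
  have e1: "of_real (b \<bullet> E) * FT (cpartial es) \<omega> + FT (cmoment E (b # es)) \<omega> = \<i> * of_real (b \<bullet> \<omega>) * FT (cmoment E es) \<omega>"
    by (rule FT_cmoment_Cons[OF a])
  have e2: "of_real (b \<bullet> E) * FT (cpartial (b # es)) \<omega> + FT (cmoment E (b # b # es)) \<omega> = \<i> * of_real (b \<bullet> \<omega>) * FT (cmoment E (b # es)) \<omega>"
    by (rule FT_cmoment_Cons[OF a2])
  have e3: "FT (cpartial (b # es)) \<omega> = \<i> * of_real (b \<bullet> \<omega>) * FT (cpartial es) \<omega>" by (rule FT_cpartial_Cons[OF a])
  have "- (of_real ((b \<bullet> \<omega>)\<^sup>2) * FT (cmoment E es) \<omega>) = \<i> * of_real (b \<bullet> \<omega>) * (\<i> * of_real (b \<bullet> \<omega>) * FT (cmoment E es) \<omega>)"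
    by (simp add: power2_eq_square algebra_simps)
  also have "\<dots> = 2 * (of_real (b \<bullet> E) * FT (cpartial (b # es)) \<omega>) + FT (cmoment E (b # b # es)) \<omega>"
    unfolding e1[symmetric] e3 using e2[unfolded e3] by (simp add: algebra_simps)
  finally have "norm (of_real ((b \<bullet> \<omega>)\<^sup>2) * FT (cmoment E es) \<omega>) = norm (2 * (of_real (b \<bullet> E) * FT (cpartial (b # es)) \<omega>) + FT (cmoment E (b # b # es)) \<omega>)"
    by (metis norm_minus_cancel)
  also have "\<dots> \<le> 2 * \<bar>b \<bullet> E\<bar> * norm (FT (cpartial (b # es)) \<omega>) + norm (FT (cmoment E (b # b # es)) \<omega>)"
    by (rule order_trans[OF norm_triangle_ineq]) (simp add: norm_mult)
  finally show ?thesis by (simp add: norm_mult inner_commute norm_power)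
qed

lemma FT_cmoment_decay: "\<forall>es. set es \<subseteq> Basis \<longrightarrow> (\<exists>C. \<forall>\<omega>. (1 + (norm \<omega>)\<^sup>2)^N * norm (FT (cmoment E es) \<omega>) \<le> C)"
proof (induction N)
  case 0
  show ?case
  proof (intro allI impI)
    fix es :: "'d pt list"
    show "\<exists>C. \<forall>\<omega>. (1 + (norm \<omega>)\<^sup>2)^0 * norm (FT (cmoment E es) \<omega>) \<le> C"
      using norm_FT_le[of "cmoment E es"] by (intro exI[of _ "LBINT p. norm (cmoment E es p)"] allI) simp
  qed
next
  case (Suc N)
  show ?case
  proof (intro allI impI)
    fix es :: "'d pt list" assume es: "set es \<subseteq> Basis"
    obtain C0 where C0: "\<And>\<omega>. (1 + (norm \<omega>)\<^sup>2)^N * norm (FT (cmoment E es) \<omega>) \<le> C0" using Suc es by blast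
    have "\<forall>b\<in>Basis. \<exists>C. \<forall>\<omega>. (1 + (norm \<omega>)\<^sup>2)^N * norm (FT (cmoment E (b # b # es)) \<omega>) \<le> C"
      using Suc es by auto
    then obtain c where c: "\<And>b \<omega>. b \<in> Basis \<Longrightarrow> (1 + (norm \<omega>)\<^sup>2)^N * norm (FT (cmoment E (b # b # es)) \<omega>) \<le> c b"
      by metis
    have "\<forall>b\<in>Basis. \<exists>C. \<forall>\<omega>. (1 + (norm \<omega>)\<^sup>2)^N * norm (FT (cpartial (b # es)) \<omega>) \<le> C"
      using FT_cpartial_decay es by auto
    then obtain d where d: "\<And>b \<omega>. b \<in> Basis \<Longrightarrow> (1 + (norm \<omega>)\<^sup>2)^N * norm (FT (cpartial (b # es)) \<omega>) \<le> d b"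
      by metis
    have "(1 + (norm \<omega>)\<^sup>2)^Suc N * norm (FT (cmoment E es) \<omega>) \<le> C0 + (\<Sum>b\<in>Basis. 2 * \<bar>b \<bullet> E\<bar> * d b + c b)" for \<omega>
    proof (rule weight_Suc_bound[where n="\<lambda>\<omega>. norm (FT (cmoment E es) \<omega>)", OF C0])
      fix b \<omega> assume b: "(b::'d pt) \<in> Basis"
      have "(1 + (norm \<omega>)\<^sup>2)^N * ((\<omega> \<bullet> b)\<^sup>2 * norm (FT (cmoment E es) \<omega>))
          \<le> (1 + (norm \<omega>)\<^sup>2)^N * (2 * \<bar>b \<bullet> E\<bar> * norm (FT (cpartial (b # es)) \<omega>) + norm (FT (cmoment E (b # b # es)) \<omega>))"
        using norm_FT_cmoment_twice_le[of b es \<omega> E] es b by (intro mult_left_mono) auto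
      also have "\<dots> = 2 * \<bar>b \<bullet> E\<bar> * ((1 + (norm \<omega>)\<^sup>2)^N * norm (FT (cpartial (b # es)) \<omega>)) + (1 + (norm \<omega>)\<^sup>2)^N * norm (FT (cmoment E (b # b # es)) \<omega>)"
        by (simp add: algebra_simps)
      also have "\<dots> \<le> 2 * \<bar>b \<bullet> E\<bar> * d b + c b"
        by (intro add_mono mult_left_mono d c b) auto
      finally show "(1 + (norm \<omega>)\<^sup>2)^N * ((\<omega> \<bullet> b)\<^sup>2 * norm (FT (cmoment E es) \<omega>)) \<le> 2 * \<bar>b \<bullet> E\<bar> * d b + c b" .
    qed
    then show "\<exists>C. \<forall>\<omega>. (1 + (norm \<omega>)\<^sup>2)^Suc N * norm (FT (cmoment E es) \<omega>) \<le> C" by blast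
  qed
qed


lemma fhat_eq_FT: "fhat f = FT (cpartial [])"
  unfolding fhat_def cpartial_def by simp

lemma vfhat_eq_FT: "vfhat f j = FT (cmoment (eta_axis j) [])"
  unfolding vfhat_def cmoment_def by (simp add: inner_eta_axis)

lemma has_vector_derivative_fhat:
  "((\<lambda>h. fhat f (\<omega> + h *\<^sub>R eta_axis j)) has_vector_derivative (- \<i> * vfhat f j \<omega>)) (at 0)"
proof -
  have "(\<lambda>p. of_real (p \<bullet> eta_axis j) * cpartial [] p) = cmoment (eta_axis j) []"
    unfolding cpartial_def cmoment_def by simp
  then show ?thesis
    using FT_has_directional_derivative[OF cpartial_continuous fsupp(1) cpartial_eq_0_outside,
        of "[]" \<omega> "eta_axis j"]
    unfolding fhat_eq_FT vfhat_eq_FT by simp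
qed

lemma deta_fhat: "deta (fhat f) j \<omega> = - \<i> * vfhat f j \<omega>"
  unfolding deta_def dirderiv_def eta_axis_def[symmetric]
  by (rule vector_derivative_at[OF has_vector_derivative_fhat])

lemma rapid_decay_fhat: "rapid_decay (\<lambda>\<omega>. cmod (fhat f \<omega>))"
  unfolding rapid_decay_def fhat_eq_FT
proof
  fix N show "\<exists>C. \<forall>\<omega>. (1 + (norm \<omega>)\<^sup>2) ^ N * cmod (FT (cpartial []) \<omega>) \<le> C"
    using FT_cpartial_decay[of N] by simp
qed

lemma rapid_decay_vfhat: "rapid_decay (\<lambda>\<omega>. cmod (vfhat f j \<omega>))"
  unfolding rapid_decay_def vfhat_eq_FT
proof
  fix N show "\<exists>C. \<forall>\<omega>. (1 + (norm \<omega>)\<^sup>2) ^ N * cmod (FT (cmoment (eta_axis j) []) \<omega>) \<le> C"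
    using FT_cmoment_decay[where N=N and E="eta_axis j"] by simp
qed

lemma fhat_borel_measurable[measurable]: "fhat f \<in> borel_measurable borel"
  using FT_borel_measurable[OF cpartial_continuous[of "[]"]] unfolding fhat_eq_FT by simp

lemma vfhat_borel_measurable[measurable]: "vfhat f j \<in> borel_measurable borel"
  using FT_borel_measurable[OF cmoment_continuous[of "[]"]] unfolding vfhat_eq_FT by simp

end

locale smooth_bounded_weight =
  fixes chi :: "'d::finite pt \<Rightarrow> real"
  assumes chi: "smooth_bounded chi"
begin

lemma iter_pd_chi_differentiable: "set es \<subseteq> Basis \<Longrightarrow> iter_pd es chi differentiable (at p)"
  using chi unfolding smooth_bounded_def smooth_def by blast

lemma iter_pd_chi_bounded: "set es \<subseteq> Basis \<Longrightarrow> bounded (range (iter_pd es chi))"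
  using chi unfolding smooth_bounded_def by blast

lemma chi_differentiable: "chi differentiable (at p)"
  using iter_pd_chi_differentiable[of "[]"] by simp

lemma chi_continuous: "continuous_on UNIV chi"
  using chi_differentiable by (simp add: continuous_at_imp_continuous_on differentiable_imp_continuous_within)

lemma chi_borel_measurable[measurable]: "chi \<in> borel_measurable borel"
  by (rule borel_measurable_continuous_onI[OF chi_continuous])

lemma chi_bounded: "\<exists>B. \<forall>p. \<bar>chi p\<bar> \<le> B"
  using iter_pd_chi_bounded[of "[]"] by (auto simp: bounded_iff)

lemma deta_chi_eq_iter_pd: "deta chi j = iter_pd [eta_axis j] chi"
  unfolding deta_def eta_axis_def by (simp add: fun_eq_iff)

lemma deta_chi_differentiable: "deta chi j differentiable (at p)"
  using iter_pd_chi_differentiable[of "[eta_axis j]"] eta_axis_in_Basis[of j]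
  unfolding deta_chi_eq_iter_pd by simp

lemma deta_chi_continuous: "continuous_on UNIV (deta chi j)"
  using deta_chi_differentiable by (simp add: continuous_at_imp_continuous_on differentiable_imp_continuous_within)

lemma deta_chi_borel_measurable[measurable]: "deta chi j \<in> borel_measurable borel"
  by (rule borel_measurable_continuous_onI[OF deta_chi_continuous])

lemma deta_chi_bounded: "\<exists>B. \<forall>p. \<bar>deta chi j p\<bar> \<le> B"
  using iter_pd_chi_bounded[of "[eta_axis j]"] eta_axis_in_Basis[of j]
  unfolding deta_chi_eq_iter_pd by (auto simp: bounded_iff)

lemma has_vector_derivative_deta_chi:
  "((\<lambda>h. chi (p + h *\<^sub>R eta_axis j)) has_vector_derivative deta chi j p) (at 0)"
  unfolding deta_def eta_axis_def[symmetric] by (rule has_vector_derivative_dirderiv[OF chi_differentiable])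

lemma norm_grad_eta_chi_borel_measurable[measurable]: "(\<lambda>p. norm (grad_eta chi p)) \<in> borel_measurable borel"
proof -
  have "continuous_on UNIV (grad_eta chi)"
    unfolding grad_eta_def by (intro continuous_on_vec_lambda deta_chi_continuous)
  then show ?thesis by (intro borel_measurable_continuous_onI continuous_intros)
qed

lemma norm_grad_eta_chi_bounded: "\<exists>B. \<forall>p. norm (grad_eta chi p) \<le> B"
proof -
  obtain B where B: "\<And>j p. \<bar>deta chi j p\<bar> \<le> B j" using deta_chi_bounded by metis
  have "norm (grad_eta chi p) \<le> (\<Sum>j\<in>UNIV. B j)" for p
  proof -
    have "norm (grad_eta chi p) \<le> (\<Sum>j\<in>UNIV. \<bar>grad_eta chi p $ j\<bar>)" by (rule norm_le_l1_cart)
    also have "\<dots> \<le> (\<Sum>j\<in>UNIV. B j)" unfolding grad_eta_def by (intro sum_mono) (simp add: B)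
    finally show ?thesis .
  qed
  then show ?thesis by blast
qed

end

lemma norm_pt_components_le:
  fixes \<omega> :: "'d::finite pt"
  shows "\<bar>fst \<omega>\<bar> \<le> norm \<omega>" "norm (fst (snd \<omega>)) \<le> norm \<omega>" "norm (snd (snd \<omega>)) \<le> norm \<omega>"
proof -
  obtain a b c where w: "\<omega> = (a, b, c)" by (cases \<omega>)
  have "norm a \<le> norm \<omega>" unfolding w by (rule norm_fst_le)
  moreover have "norm (b, c) \<le> norm \<omega>" unfolding w by (rule norm_snd_le)
  moreover have "norm b \<le> norm (b, c)" "norm c \<le> norm (b, c)" by (rule norm_fst_le, rule norm_snd_le)
  ultimately show "\<bar>fst \<omega>\<bar> \<le> norm \<omega>" "norm (fst (snd \<omega>)) \<le> norm \<omega>" "norm (snd (snd \<omega>)) \<le> norm \<omega>"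
    using w by auto
qed

lemma pt_components_le:
  fixes \<omega> :: "'d::finite pt"
  shows "\<bar>fst (snd \<omega>) $ j\<bar> \<le> 1 + (norm \<omega>)\<^sup>2" "\<bar>snd (snd \<omega>) $ j\<bar> \<le> 1 + (norm \<omega>)\<^sup>2"
    "norm (fst (snd \<omega>)) \<le> 1 + (norm \<omega>)\<^sup>2" "norm (snd (snd \<omega>)) \<le> 1 + (norm \<omega>)\<^sup>2"
    "\<bar>fst \<omega>\<bar> \<le> 1 + (norm \<omega>)\<^sup>2"
    "\<bar>fst (snd \<omega>) \<bullet> snd (snd \<omega>)\<bar> \<le> (1 + (norm \<omega>)\<^sup>2)^2"
proof -
  show a: "norm (fst (snd \<omega>)) \<le> 1 + (norm \<omega>)\<^sup>2"
    using norm_le_one_plus_power2_norm norm_pt_components_le(2) by blast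
  show b: "norm (snd (snd \<omega>)) \<le> 1 + (norm \<omega>)\<^sup>2"
    using norm_le_one_plus_power2_norm norm_pt_components_le(3) by blast
  show "\<bar>fst (snd \<omega>) $ j\<bar> \<le> 1 + (norm \<omega>)\<^sup>2"
    using component_le_norm_cart[of "fst (snd \<omega>)" j] a by linarith
  show "\<bar>snd (snd \<omega>) $ j\<bar> \<le> 1 + (norm \<omega>)\<^sup>2"
    using component_le_norm_cart[of "snd (snd \<omega>)" j] b by linarith
  show "\<bar>fst \<omega>\<bar> \<le> 1 + (norm \<omega>)\<^sup>2"
    using norm_le_one_plus_power2_norm norm_pt_components_le(1) by (metis real_norm_def)
  have "\<bar>fst (snd \<omega>) \<bullet> snd (snd \<omega>)\<bar> \<le> norm (fst (snd \<omega>)) * norm (snd (snd \<omega>))"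
    by (rule Cauchy_Schwarz_ineq2)
  also have "\<dots> \<le> (1 + (norm \<omega>)\<^sup>2) * (1 + (norm \<omega>)\<^sup>2)" by (intro mult_mono a b) auto
  finally show "\<bar>fst (snd \<omega>) \<bullet> snd (snd \<omega>)\<bar> \<le> (1 + (norm \<omega>)\<^sup>2)^2" by (simp add: power2_eq_square)
qed

locale kinetic_data = test_function_pt f + smooth_bounded_weight chi for f chi :: "'d::finite pt \<Rightarrow> real"
begin

definition xi_dot_vfhat :: "'d pt \<Rightarrow> complex" where
  "xi_dot_vfhat \<omega> = (\<Sum>j\<in>UNIV. of_real (fst (snd \<omega>) $ j) * vfhat f j \<omega>)"

definition xi_dot_uconv :: "(real \<times> (real^'d) \<Rightarrow> real^'d) \<Rightarrow> 'd pt \<Rightarrow> complex" where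
  "xi_dot_uconv u \<omega> = (\<Sum>j\<in>UNIV. of_real (fst (snd \<omega>) $ j) * uconv u f j \<omega>)"

lemma Xop_eq_i_mult: "Xop u f \<omega> = \<i> * (of_real (fst \<omega>) * fhat f \<omega> + xi_dot_vfhat \<omega> + xi_dot_uconv u \<omega>)"
  unfolding xi_dot_vfhat_def xi_dot_uconv_def
  by (cases \<omega>) (simp add: Xop_def deta_fhat algebra_simps sum_distrib_left sum_subtractf[symmetric] sum.distrib[symmetric])

lemma norm_xi_dot_vfhat_le: "norm (xi_dot_vfhat \<omega>) \<le> (1 + (norm \<omega>)\<^sup>2) * (\<Sum>j\<in>UNIV. cmod (vfhat f j \<omega>))"
proof -
  have "norm (xi_dot_vfhat \<omega>) \<le> (\<Sum>j\<in>UNIV. norm (of_real (fst (snd \<omega>) $ j) * vfhat f j \<omega>))"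
    unfolding xi_dot_vfhat_def by (rule norm_sum)
  also have "\<dots> \<le> (\<Sum>j\<in>UNIV. (1 + (norm \<omega>)\<^sup>2) * cmod (vfhat f j \<omega>))"
    by (intro sum_mono) (auto simp: norm_mult intro!: mult_right_mono pt_components_le)
  finally show ?thesis by (simp add: sum_distrib_left)
qed

definition chi_bound :: real where "chi_bound = (SOME B. \<forall>p. \<bar>chi p\<bar> \<le> B)"

definition deta_chi_bound :: real where "deta_chi_bound = (SOME B. \<forall>j p. \<bar>deta chi j p\<bar> \<le> B)"

lemma chi_bounds: "\<bar>chi p\<bar> \<le> chi_bound" "\<bar>deta chi j p\<bar> \<le> deta_chi_bound" "0 \<le> chi_bound" "0 \<le> deta_chi_bound"
proof -
  have chi_le: "\<forall>p. \<bar>chi p\<bar> \<le> chi_bound"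
    unfolding chi_bound_def using chi_bounded by (rule someI_ex)
  obtain B where "\<And>p. norm (grad_eta chi p) \<le> B" using norm_grad_eta_chi_bounded by blast
  then have "\<bar>deta chi j p\<bar> \<le> B" for j p
    using component_le_norm_cart[of "grad_eta chi p" j] unfolding grad_eta_def by (metis order_trans vec_lambda_beta)
  then have deta_le: "\<forall>j p. \<bar>deta chi j p\<bar> \<le> deta_chi_bound"
    unfolding deta_chi_bound_def by (intro someI_ex[of "\<lambda>B. \<forall>j p. \<bar>deta chi j p\<bar> \<le> B"]) blast
  show "\<bar>chi p\<bar> \<le> chi_bound" "\<bar>deta chi j p\<bar> \<le> deta_chi_bound" using chi_le deta_le by blast+
  show "0 \<le> chi_bound" "0 \<le> deta_chi_bound" using chi_le deta_le by (meson abs_ge_zero order_trans)+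
qed

lemma integrable_weight_fhat_sq:
  fixes w :: "'d pt \<Rightarrow> real"
  assumes [measurable]: "w \<in> borel_measurable borel"
    and w: "\<And>\<omega>. \<bar>w \<omega>\<bar> \<le> c * (1 + (norm \<omega>)\<^sup>2)^k"
  shows "integrable lborel (\<lambda>\<omega>. w \<omega> * (cmod (fhat f \<omega>))\<^sup>2)"
proof (rule integrable_by_rapid_decay[OF _ rapid_decay_mult[OF rapid_decay_fhat rapid_decay_fhat norm_ge_zero norm_ge_zero]])
  show "(\<lambda>\<omega>. w \<omega> * (cmod (fhat f \<omega>))\<^sup>2) \<in> borel_measurable lborel" by simp
  show "0 \<le> c" using order_trans[OF abs_ge_zero w[of 0]] by simp
  show "norm (w \<omega> * (cmod (fhat f \<omega>))\<^sup>2) \<le> c * ((1 + (norm \<omega>)\<^sup>2)^k * (cmod (fhat f \<omega>) * cmod (fhat f \<omega>)))" for \<omega>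
    using mult_right_mono[OF w[of \<omega>], of "(cmod (fhat f \<omega>))\<^sup>2"]
    by (simp add: abs_mult power2_eq_square mult_ac)
qed

lemma integrable_weight_xi_dot_vfhat:
  fixes w :: "'d pt \<Rightarrow> real"
  assumes [measurable]: "w \<in> borel_measurable borel"
    and w: "\<And>\<omega>. \<bar>w \<omega>\<bar> \<le> c * (1 + (norm \<omega>)\<^sup>2)^k"
  shows "integrable lborel (\<lambda>\<omega>. of_real (w \<omega>) * xi_dot_vfhat \<omega> * cnj (fhat f \<omega>))"
proof (rule integrable_by_rapid_decay[where n="\<lambda>\<omega>. (\<Sum>j\<in>UNIV. cmod (vfhat f j \<omega>)) * cmod (fhat f \<omega>)"])
  show "(\<lambda>\<omega>. of_real (w \<omega>) * xi_dot_vfhat \<omega> * cnj (fhat f \<omega>)) \<in> borel_measurable lborel"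
    unfolding xi_dot_vfhat_def by simp
  show "rapid_decay (\<lambda>\<omega>. (\<Sum>j\<in>UNIV. cmod (vfhat f j \<omega>)) * cmod (fhat f \<omega>))"
    by (intro rapid_decay_mult rapid_decay_fhat rapid_decay_sum rapid_decay_vfhat sum_nonneg) auto
  show "0 \<le> c" using order_trans[OF abs_ge_zero w[of 0]] by simp
  fix \<omega> :: "'d pt"
  have "norm (of_real (w \<omega>) * xi_dot_vfhat \<omega> * cnj (fhat f \<omega>)) = \<bar>w \<omega>\<bar> * norm (xi_dot_vfhat \<omega>) * cmod (fhat f \<omega>)"
    by (simp add: norm_mult)
  also have "\<dots> \<le> (c * (1 + (norm \<omega>)\<^sup>2)^k) * ((1 + (norm \<omega>)\<^sup>2) * (\<Sum>j\<in>UNIV. cmod (vfhat f j \<omega>))) * cmod (fhat f \<omega>)"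
    by (intro mult_mono' w norm_xi_dot_vfhat_le order_refl) auto
  also have "\<dots> = c * ((1 + (norm \<omega>)\<^sup>2)^Suc k * ((\<Sum>j\<in>UNIV. cmod (vfhat f j \<omega>)) * cmod (fhat f \<omega>)))"
    by (simp add: mult_ac)
  finally show "norm (of_real (w \<omega>) * xi_dot_vfhat \<omega> * cnj (fhat f \<omega>))
    \<le> c * ((1 + (norm \<omega>)\<^sup>2)^Suc k * ((\<Sum>j\<in>UNIV. cmod (vfhat f j \<omega>)) * cmod (fhat f \<omega>)))" .
qed

end

locale weighted_kinetic_data = kinetic_data f chi for f chi :: "'d::finite pt \<Rightarrow> real" +
  fixes s r :: real
begin

text \<open>Every power \<open>\<langle>x\<rangle>\<^sup>a\<close> occurring below, with \<open>|x| \<le> |\<omega>|\<close>, is bounded by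
  \<open>(1 + |\<omega>|\<^sup>2)\<^sup>K\<close> for this single degree \<open>K\<close>.\<close>

definition bracket_degree :: nat where
  "bracket_degree = nat \<lceil>\<bar>2 * s - 2\<bar> + \<bar>2 * r\<bar> + \<bar>2 * s\<bar> + \<bar>1 - 2 * r\<bar> + 2\<rceil>"

lemma jbr_powr_le_bracket_degree:
  assumes "\<bar>a\<bar> \<le> \<bar>2 * s - 2\<bar> + \<bar>2 * r\<bar> + \<bar>2 * s\<bar> + \<bar>1 - 2 * r\<bar> + 2" "norm x \<le> norm \<omega>"
  shows "jbr x powr a \<le> (1 + (norm \<omega>)\<^sup>2) ^ bracket_degree"
proof (rule jbr_powr_bound[OF assms(2)])
  have "\<bar>2 * s - 2\<bar> + \<bar>2 * r\<bar> + \<bar>2 * s\<bar> + \<bar>1 - 2 * r\<bar> + 2 \<le> real bracket_degree"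
    unfolding bracket_degree_def by (rule real_nat_ceiling_ge)
  then show "\<bar>a\<bar> \<le> 2 * real bracket_degree" using assms(1) by linarith
qed

section \<open>The identity for the time frequency\<close>

definition tau_weight :: "'d pt \<Rightarrow> real" where
  "tau_weight \<omega> = chi \<omega> * fst \<omega> * jbr (fst \<omega>) powr (2 * s - 2) * jbr (snd (snd \<omega>)) powr (- 2 * r)"

lemma tau_weight_borel_measurable[measurable]: "tau_weight \<in> borel_measurable borel"
  unfolding tau_weight_def[abs_def] by measurable

lemma abs_tau_weight_le:
  "\<bar>tau_weight \<omega>\<bar> \<le> chi_bound * (1 + (norm \<omega>)\<^sup>2)^(bracket_degree + bracket_degree + 1)"
proof -
  have "norm (fst \<omega>) \<le> norm \<omega>" using norm_pt_components_le(1) by simp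
  have "\<bar>tau_weight \<omega>\<bar> = \<bar>chi \<omega>\<bar> * \<bar>fst \<omega>\<bar> * jbr (fst \<omega>) powr (2 * s - 2) * jbr (snd (snd \<omega>)) powr (- 2 * r)"
    unfolding tau_weight_def by (simp add: abs_mult)
  also have "\<dots> \<le> chi_bound * (1 + (norm \<omega>)\<^sup>2) * (1 + (norm \<omega>)\<^sup>2)^bracket_degree * (1 + (norm \<omega>)\<^sup>2)^bracket_degree"
    using \<open>norm (fst \<omega>) \<le> norm \<omega>\<close> norm_pt_components_le(3)[of \<omega>]
    by (intro mult_mono' chi_bounds pt_components_le jbr_powr_le_bracket_degree) auto
  finally show ?thesis by (simp add: power_add mult_ac)
qed

lemma tau_weight_Xop_eq:
  "of_real (tau_weight \<omega>) * Xop u f \<omega> * cnj (fhat f \<omega>)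
   = \<i> * (of_real (fst \<omega> * tau_weight \<omega> * (cmod (fhat f \<omega>))\<^sup>2)
          + of_real (tau_weight \<omega>) * xi_dot_vfhat \<omega> * cnj (fhat f \<omega>)
          + of_real (tau_weight \<omega>) * xi_dot_uconv u \<omega> * cnj (fhat f \<omega>))"
proof -
  have "fhat f \<omega> * cnj (fhat f \<omega>) = of_real ((cmod (fhat f \<omega>))\<^sup>2)" by (metis complex_norm_square)
  then show ?thesis unfolding Xop_eq_i_mult by (simp add: algebra_simps)
qed

lemma integrable_tau_density: "integrable lborel (\<lambda>\<omega>. fst \<omega> * tau_weight \<omega> * (cmod (fhat f \<omega>))\<^sup>2)"
proof (rule integrable_weight_fhat_sq)
  show "\<bar>fst \<omega> * tau_weight \<omega>\<bar> \<le> chi_bound * (1 + (norm \<omega>)\<^sup>2)^(bracket_degree + bracket_degree + 2)" for \<omega>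
    using mult_mono'[OF pt_components_le(5) abs_tau_weight_le] chi_bounds(3)
    by (simp add: abs_mult mult_ac)
qed simp

lemma integrable_tau_weight_vfhat:
  "integrable lborel (\<lambda>\<omega>. of_real (tau_weight \<omega>) * xi_dot_vfhat \<omega> * cnj (fhat f \<omega>))"
  by (rule integrable_weight_xi_dot_vfhat[OF _ abs_tau_weight_le]) simp

lemma Im_integral_tau_weight_Xop:
  assumes iU: "integrable lborel (\<lambda>\<omega>. of_real (tau_weight \<omega>) * xi_dot_uconv u \<omega> * cnj (fhat f \<omega>))"
  shows "Im (LINT \<omega>|lborel. of_real (tau_weight \<omega>) * Xop u f \<omega> * cnj (fhat f \<omega>))
    = (LINT \<omega>|lborel. fst \<omega> * tau_weight \<omega> * (cmod (fhat f \<omega>))\<^sup>2)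
      + Re (LINT \<omega>|lborel. of_real (tau_weight \<omega>) * xi_dot_vfhat \<omega> * cnj (fhat f \<omega>))
      + Re (LINT \<omega>|lborel. of_real (tau_weight \<omega>) * xi_dot_uconv u \<omega> * cnj (fhat f \<omega>))"
proof -
  define L where "L \<omega> = fst \<omega> * tau_weight \<omega> * (cmod (fhat f \<omega>))\<^sup>2" for \<omega>
  have "integrable lborel (\<lambda>\<omega>. complex_of_real (L \<omega>))"
    unfolding L_def by (rule integrable_of_real[OF integrable_tau_density])
  then have "(LINT \<omega>|lborel. of_real (tau_weight \<omega>) * Xop u f \<omega> * cnj (fhat f \<omega>))
    = \<i> * ((LINT \<omega>|lborel. complex_of_real (L \<omega>))
      + (LINT \<omega>|lborel. of_real (tau_weight \<omega>) * xi_dot_vfhat \<omega> * cnj (fhat f \<omega>))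
      + (LINT \<omega>|lborel. of_real (tau_weight \<omega>) * xi_dot_uconv u \<omega> * cnj (fhat f \<omega>)))"
    using integrable_tau_weight_vfhat iU unfolding tau_weight_Xop_eq L_def[symmetric] by simp
  also have "(LINT \<omega>|lborel. complex_of_real (L \<omega>)) = of_real (LINT \<omega>|lborel. L \<omega>)"
    by (rule integral_complex_of_real)
  finally show ?thesis unfolding L_def by simp
qed

lemma tau_identity:
  fixes u :: "real \<times> (real^'d) \<Rightarrow> real^'d"
  assumes int2: "integrable lborel (\<lambda>(\<tau>, \<xi>, \<eta>).
       complex_of_real (chi (\<tau>, \<xi>, \<eta>) * \<tau> * jbr \<tau> powr (2 * s - 2) * jbr \<eta> powr (- 2 * r))
       * (\<Sum>j\<in>UNIV. of_real (\<xi> $ j) * uconv u f j (\<tau>, \<xi>, \<eta>)) * cnj (fhat f (\<tau>, \<xi>, \<eta>)))"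
  shows
   "((LINT \<omega>|lborel. (case \<omega> of (\<tau>, \<xi>, \<eta>) \<Rightarrow>
        chi \<omega> * \<bar>\<tau>\<bar>\<^sup>2 * jbr \<tau> powr (2 * s - 2) * jbr \<eta> powr (- 2 * r) * (cmod (fhat f \<omega>))\<^sup>2))
    = - Re (LINT \<omega>|lborel. (case \<omega> of (\<tau>, \<xi>, \<eta>) \<Rightarrow>
        complex_of_real (chi \<omega> * \<tau> * jbr \<tau> powr (2 * s - 2) * jbr \<eta> powr (- 2 * r))
        * (\<Sum>j\<in>UNIV. of_real (\<xi> $ j) * vfhat f j \<omega>) * cnj (fhat f \<omega>)))
      + Im (LINT \<omega>|lborel. (case \<omega> of (\<tau>, \<xi>, \<eta>) \<Rightarrow>
        complex_of_real (chi \<omega> * \<tau> * jbr \<tau> powr (2 * s - 2) * jbr \<eta> powr (- 2 * r))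
        * Xop u f \<omega> * cnj (fhat f \<omega>)))
      - Re (LINT \<omega>|lborel. (case \<omega> of (\<tau>, \<xi>, \<eta>) \<Rightarrow>
        complex_of_real (chi \<omega> * \<tau> * jbr \<tau> powr (2 * s - 2) * jbr \<eta> powr (- 2 * r))
        * (\<Sum>j\<in>UNIV. of_real (\<xi> $ j) * uconv u f j \<omega>) * cnj (fhat f \<omega>))))"
proof -
  have "(\<lambda>(\<tau>, \<xi>, \<eta>).
       complex_of_real (chi (\<tau>, \<xi>, \<eta>) * \<tau> * jbr \<tau> powr (2 * s - 2) * jbr \<eta> powr (- 2 * r))
       * (\<Sum>j\<in>UNIV. of_real (\<xi> $ j) * uconv u f j (\<tau>, \<xi>, \<eta>)) * cnj (fhat f (\<tau>, \<xi>, \<eta>)))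
    = (\<lambda>\<omega>. of_real (tau_weight \<omega>) * xi_dot_uconv u \<omega> * cnj (fhat f \<omega>))"
    by (auto simp: fun_eq_iff tau_weight_def xi_dot_uconv_def split: prod.splits)
  then have "Im (LINT \<omega>|lborel. of_real (tau_weight \<omega>) * Xop u f \<omega> * cnj (fhat f \<omega>))
    = (LINT \<omega>|lborel. fst \<omega> * tau_weight \<omega> * (cmod (fhat f \<omega>))\<^sup>2)
      + Re (LINT \<omega>|lborel. of_real (tau_weight \<omega>) * xi_dot_vfhat \<omega> * cnj (fhat f \<omega>))
      + Re (LINT \<omega>|lborel. of_real (tau_weight \<omega>) * xi_dot_uconv u \<omega> * cnj (fhat f \<omega>))"
    using int2 by (intro Im_integral_tau_weight_Xop) simp
  moreover have "(\<lambda>\<omega>. case \<omega> of (\<tau>, \<xi>, \<eta>) \<Rightarrow>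
        chi \<omega> * \<bar>\<tau>\<bar>\<^sup>2 * jbr \<tau> powr (2 * s - 2) * jbr \<eta> powr (- 2 * r) * (cmod (fhat f \<omega>))\<^sup>2)
    = (\<lambda>\<omega>. fst \<omega> * tau_weight \<omega> * (cmod (fhat f \<omega>))\<^sup>2)"
    by (auto simp: fun_eq_iff tau_weight_def power2_eq_square split: prod.splits)
  ultimately show ?thesis
    by (simp add: case_prod_beta' tau_weight_def xi_dot_vfhat_def xi_dot_uconv_def)
qed

end

section \<open>The inequality for the velocity frequency\<close>

text \<open>The pointwise inequality, with \<open>nx\<close>, \<open>ng\<close>, \<open>ne\<close> the norms of \<open>\<xi>\<close>, \<open>\<nabla>\<^sub>\<eta>\<chi>\<close>,
  \<open>\<eta>\<close>, with \<open>xg = \<xi>\<cdot>\<nabla>\<^sub>\<eta>\<chi>\<close>, \<open>xe = \<xi>\<cdot>\<eta>\<close>, \<open>jb = \<langle>\<eta>\<rangle>\<close> and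
  \<open>a = \<langle>\<xi>\<rangle>^(2s-2)\<close>, \<open>b2 = \<langle>\<eta>\<rangle>^(-2r-2)\<close>, \<open>c2 = \<langle>\<eta>\<rangle>^(-2r)\<close>. The term with
  \<open>\<nabla>\<^sub>\<eta>\<chi>\<close> is absorbed by Cauchy-Schwarz, and \<open>(\<xi>\<cdot>\<eta>)\<^sup>2 \<le> |\<xi>|\<^sup>2 |\<eta>|\<^sup>2\<close> produces the
  factor \<open>1 + (1 - 2r)|\<eta>|\<^sup>2\<close>.\<close>

lemma eta_density_ineq:
  fixes chi a b2 r xg xe nx ng ne jb c2 :: real
  assumes "chi \<ge> 0" "a \<ge> 0" "b2 \<ge> 0" "r \<ge> 0" "\<bar>xg\<bar> \<le> nx * ng" "\<bar>xe\<bar> \<le> nx * ne" "ne \<le> jb"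
    "nx \<ge> 0" "ng \<ge> 0" "ne \<ge> 0" "c2 = b2 * (1 + ne\<^sup>2)"
  shows "chi * nx\<^sup>2 * a * b2 * (1 + (1 - 2 * r) * ne\<^sup>2)
     \<le> xg * xe * (a * c2) + chi * nx\<^sup>2 * (a * c2) + chi * xe * (a * ((- 2 * r) * xe * b2)) + ng * (a * (1 + nx\<^sup>2)) * (jb * c2)"
proof -
  have q0: "0 \<le> chi * a * b2" using assms by simp
  have xe2: "xe * xe \<le> (nx * ne) * (nx * ne)"
  proof -
    have "\<bar>xe\<bar> * \<bar>xe\<bar> \<le> (nx * ne) * (nx * ne)" using assms(6) by (intro mult_mono) auto
    then show ?thesis by (simp add: abs_mult_self_eq)
  qed
  have i1: "chi * a * b2 * (2 * r) * (xe * xe) \<le> chi * a * b2 * (2 * r) * ((nx * ne) * (nx * ne))"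
    using q0 assms(4) xe2 by (intro mult_left_mono) auto
  have c2n: "0 \<le> c2" using assms by simp
  have i2: "\<bar>xg * xe * (a * c2)\<bar> \<le> (nx * ng) * (nx * ne) * (a * c2)"
    unfolding abs_mult using assms c2n by (intro mult_mono) auto
  have i3: "(nx * ng) * (nx * ne) * (a * c2) \<le> ng * (a * (1 + nx\<^sup>2)) * (jb * c2)"
  proof -
    have "nx * nx \<le> 1 + nx\<^sup>2" by (simp add: power2_eq_square)
    then have "(nx * ng) * (nx * ne) * (a * c2) = (nx * nx) * ne * (ng * a * c2)" by (simp add: mult_ac)
    also have "\<dots> \<le> (1 + nx\<^sup>2) * jb * (ng * a * c2)"
      using assms c2n \<open>nx * nx \<le> 1 + nx\<^sup>2\<close> by (intro mult_mono mult_nonneg_nonneg) auto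
    also have "\<dots> = ng * (a * (1 + nx\<^sup>2)) * (jb * c2)" by (simp add: mult_ac)
    finally show ?thesis .
  qed
  have e1: "chi * nx\<^sup>2 * (a * c2) + chi * xe * (a * ((- 2 * r) * xe * b2))
      = chi * a * b2 * (nx\<^sup>2 * (1 + ne\<^sup>2)) - chi * a * b2 * (2 * r) * (xe * xe)"
    using assms(11) by (simp add: algebra_simps)
  have e2: "chi * nx\<^sup>2 * a * b2 * (1 + (1 - 2 * r) * ne\<^sup>2)
      = chi * a * b2 * (nx\<^sup>2 * (1 + ne\<^sup>2)) - chi * a * b2 * (2 * r) * ((nx * ne) * (nx * ne))"
    by (simp add: algebra_simps power2_eq_square)
  show ?thesis using e1 e2 i1 i2 i3 by linarith
qed

locale eta_weighted = weighted_kinetic_data f chi s r for f chi :: "'d::finite pt \<Rightarrow> real" and s r +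
  assumes r0: "r \<ge> 0" and chi0: "\<And>\<omega>. chi \<omega> \<ge> 0"
begin

definition bracket_factor where "bracket_factor \<omega> = jbr (fst (snd \<omega>)) powr (2 * s - 2) * jbr (snd (snd \<omega>)) powr (- 2 * r)"

text \<open>\<open>multiplier\<close> is the weight \<open>W\<close> of the proof idea and \<open>deta_multiplier j\<close> its
  \<open>\<eta>\<^sub>j\<close>-derivative.\<close>

definition multiplier where "multiplier \<omega> = chi \<omega> * (fst (snd \<omega>) \<bullet> snd (snd \<omega>)) * bracket_factor \<omega>"

definition fhat_sq where "fhat_sq \<omega> = (cmod (fhat f \<omega>))\<^sup>2"

definition deta_multiplier where
  "deta_multiplier j \<omega> = deta chi j \<omega> * (fst (snd \<omega>) \<bullet> snd (snd \<omega>)) * bracket_factor \<omega>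
   + chi \<omega> * (fst (snd \<omega>) $ j) * bracket_factor \<omega>
   + chi \<omega> * (fst (snd \<omega>) \<bullet> snd (snd \<omega>)) * (jbr (fst (snd \<omega>)) powr (2 * s - 2) * ((- 2 * r) * (snd (snd \<omega>) $ j) * jbr (snd (snd \<omega>)) powr (- 2 * r - 2)))"

definition deta_fhat_sq where "deta_fhat_sq j \<omega> = 2 * Re ((- \<i> * vfhat f j \<omega>) * cnj (fhat f \<omega>))"

definition flux_deriv where "flux_deriv j \<omega> = fst (snd \<omega>) $ j * (multiplier \<omega> * deta_fhat_sq j \<omega> + deta_multiplier j \<omega> * fhat_sq \<omega>)"

definition flux where "flux j \<omega> = fst (snd \<omega>) $ j * (multiplier \<omega> * fhat_sq \<omega>)"

lemma has_vector_derivative_flux: "((\<lambda>h. flux j (\<omega> + h *\<^sub>R eta_axis j)) has_vector_derivative flux_deriv j \<omega>) (at 0)"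
proof -
  obtain \<tau> \<xi> \<eta> where w: "\<omega> = (\<tau>, \<xi>, \<eta>)" by (cases \<omega>)
  define e :: "real^'d" where "e = axis j 1"
  have sh: "\<omega> + h *\<^sub>R eta_axis j = (\<tau>, \<xi>, \<eta> + h *\<^sub>R e)" for h unfolding w eta_axis_def e_def by simp
  have fe: "(\<lambda>h. flux j (\<omega> + h *\<^sub>R eta_axis j)) = (\<lambda>h. \<xi> $ j * ((chi (\<omega> + h *\<^sub>R eta_axis j) * (\<xi> \<bullet> (\<eta> + h *\<^sub>R e))
      * (jbr \<xi> powr (2 * s - 2) * jbr (\<eta> + h *\<^sub>R e) powr (- 2 * r))) * (cmod (fhat f (\<omega> + h *\<^sub>R eta_axis j)))\<^sup>2))"
    unfolding flux_def multiplier_def bracket_factor_def fhat_sq_def by (simp add: sh)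
  have d1: "((\<lambda>h. chi (\<omega> + h *\<^sub>R eta_axis j)) has_vector_derivative deta chi j \<omega>) (at 0)" by (rule has_vector_derivative_deta_chi)
  have d2: "((\<lambda>h. \<xi> \<bullet> (\<eta> + h *\<^sub>R e)) has_vector_derivative (\<xi> $ j)) (at 0)"
    unfolding has_real_derivative_iff_has_vector_derivative[symmetric] e_def
    by (auto intro!: derivative_eq_intros simp: inner_add_right inner_axis)
  have d3: "((\<lambda>h. jbr (\<eta> + h *\<^sub>R e) powr (- 2 * r)) has_vector_derivative ((- 2 * r) * (\<eta> $ j) * jbr \<eta> powr (- 2 * r - 2))) (at 0)"
    using has_vector_derivative_jbr_powr[of \<eta> e "- 2 * r"] unfolding e_def by (simp add: inner_axis)
  have d4: "((\<lambda>h. (cmod (fhat f (\<omega> + h *\<^sub>R eta_axis j)))\<^sup>2) has_vector_derivative deta_fhat_sq j \<omega>) (at 0)"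
  proof -
    from has_vector_derivative_power2_cmod[OF has_vector_derivative_fhat]
    show ?thesis unfolding deta_fhat_sq_def by simp
  qed
  have d23: "((\<lambda>h. jbr \<xi> powr (2 * s - 2) * jbr (\<eta> + h *\<^sub>R e) powr (- 2 * r)) has_vector_derivative
     (jbr \<xi> powr (2 * s - 2) * ((- 2 * r) * (\<eta> $ j) * jbr \<eta> powr (- 2 * r - 2)))) (at 0)"
    by (rule has_vector_derivative_mult_right[OF d3])
  have d12: "((\<lambda>h. chi (\<omega> + h *\<^sub>R eta_axis j) * (\<xi> \<bullet> (\<eta> + h *\<^sub>R e))) has_vector_derivative
     (chi (\<omega> + 0 *\<^sub>R eta_axis j) * (\<xi> $ j) + deta chi j \<omega> * (\<xi> \<bullet> (\<eta> + 0 *\<^sub>R e)))) (at 0)"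
    by (rule has_vector_derivative_mult[OF d1 d2])
  have dWW: "((\<lambda>h. chi (\<omega> + h *\<^sub>R eta_axis j) * (\<xi> \<bullet> (\<eta> + h *\<^sub>R e)) * (jbr \<xi> powr (2 * s - 2) * jbr (\<eta> + h *\<^sub>R e) powr (- 2 * r)))
     has_vector_derivative deta_multiplier j \<omega>) (at 0)"
    by (rule has_vector_derivative_eq_rhs[OF has_vector_derivative_mult[OF d12 d23]]) (simp add: deta_multiplier_def bracket_factor_def w algebra_simps)
  have "((\<lambda>h. (chi (\<omega> + h *\<^sub>R eta_axis j) * (\<xi> \<bullet> (\<eta> + h *\<^sub>R e)) * (jbr \<xi> powr (2 * s - 2) * jbr (\<eta> + h *\<^sub>R e) powr (- 2 * r)))
     * (cmod (fhat f (\<omega> + h *\<^sub>R eta_axis j)))\<^sup>2) has_vector_derivative multiplier \<omega> * deta_fhat_sq j \<omega> + deta_multiplier j \<omega> * fhat_sq \<omega>) (at 0)"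
    by (rule has_vector_derivative_eq_rhs[OF has_vector_derivative_mult[OF dWW d4]]) (simp add: multiplier_def bracket_factor_def fhat_sq_def w)
  then show ?thesis unfolding fe flux_deriv_def
    by (rule has_vector_derivative_eq_rhs[OF has_vector_derivative_mult_right]) (simp add: w)
qed

lemma abs_bracket_factor_le: "\<bar>bracket_factor (\<omega>::'d pt)\<bar> \<le> (1 + (norm \<omega>)\<^sup>2)^(bracket_degree + bracket_degree)"
proof -
  have "\<bar>bracket_factor \<omega>\<bar> = jbr (fst (snd \<omega>)) powr (2 * s - 2) * jbr (snd (snd \<omega>)) powr (- 2 * r)"
    unfolding bracket_factor_def by simp
  also have "\<dots> \<le> (1 + (norm \<omega>)\<^sup>2)^bracket_degree * (1 + (norm \<omega>)\<^sup>2)^bracket_degree"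
    using norm_pt_components_le(2)[of \<omega>] norm_pt_components_le(3)[of \<omega>] by (intro mult_mono' jbr_powr_le_bracket_degree) auto
  finally show ?thesis by (simp add: power_add)
qed

lemma abs_multiplier_le: "\<bar>multiplier \<omega>\<bar> \<le> chi_bound * (1 + (norm \<omega>)\<^sup>2)^(bracket_degree + bracket_degree + 2)"
proof -
  have "\<bar>multiplier \<omega>\<bar> = \<bar>chi \<omega>\<bar> * \<bar>fst (snd \<omega>) \<bullet> snd (snd \<omega>)\<bar> * \<bar>bracket_factor \<omega>\<bar>" unfolding multiplier_def by (simp add: abs_mult)
  also have "\<dots> \<le> chi_bound * (1 + (norm \<omega>)\<^sup>2)^2 * (1 + (norm \<omega>)\<^sup>2)^(bracket_degree + bracket_degree)"
    by (intro mult_mono' chi_bounds pt_components_le abs_bracket_factor_le) auto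
  also have "\<dots> = chi_bound * (1 + (norm \<omega>)\<^sup>2)^(bracket_degree + bracket_degree + 2)" by (simp only: power_add mult_ac)
  finally show ?thesis .
qed

lemma abs_deta_multiplier_le: "\<bar>deta_multiplier j \<omega>\<bar> \<le> (deta_chi_bound + chi_bound + 2 * r * chi_bound) * (1 + (norm \<omega>)\<^sup>2)^(bracket_degree + bracket_degree + 3)"
proof -
  let ?X = "1 + (norm \<omega>)\<^sup>2"
  have X1: "1 \<le> ?X" by simp
  have t1: "\<bar>deta chi j \<omega> * (fst (snd \<omega>) \<bullet> snd (snd \<omega>)) * bracket_factor \<omega>\<bar> \<le> deta_chi_bound * ?X^(bracket_degree + bracket_degree + 3)"
  proof -
    have "\<bar>deta chi j \<omega> * (fst (snd \<omega>) \<bullet> snd (snd \<omega>)) * bracket_factor \<omega>\<bar> \<le> deta_chi_bound * ?X^2 * ?X^(bracket_degree+bracket_degree)"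
      unfolding abs_mult by (intro mult_mono' chi_bounds pt_components_le abs_bracket_factor_le) auto
    also have "\<dots> \<le> deta_chi_bound * ?X^(bracket_degree + bracket_degree + 3)"
      using one_plus_power2_norm_power_mono[of "bracket_degree+bracket_degree+2" "bracket_degree+bracket_degree+3" \<omega>] chi_bounds(4) by (simp add: power_add[symmetric] mult.assoc mult_left_mono add.commute)
    finally show ?thesis .
  qed
  have t2: "\<bar>chi \<omega> * (fst (snd \<omega>) $ j) * bracket_factor \<omega>\<bar> \<le> chi_bound * ?X^(bracket_degree + bracket_degree + 3)"
  proof -
    have "\<bar>chi \<omega> * (fst (snd \<omega>) $ j) * bracket_factor \<omega>\<bar> \<le> chi_bound * ?X * ?X^(bracket_degree+bracket_degree)"
      unfolding abs_mult by (intro mult_mono' chi_bounds pt_components_le abs_bracket_factor_le) auto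
    also have "\<dots> \<le> chi_bound * ?X^(bracket_degree + bracket_degree + 3)"
      using one_plus_power2_norm_power_mono[of "bracket_degree+bracket_degree+1" "bracket_degree+bracket_degree+3" \<omega>] chi_bounds(3) by (simp add: power_add[symmetric] mult.assoc mult_left_mono add.commute)
    finally show ?thesis .
  qed
  have t3: "\<bar>chi \<omega> * (fst (snd \<omega>) \<bullet> snd (snd \<omega>)) * (jbr (fst (snd \<omega>)) powr (2 * s - 2) * ((- 2 * r) * (snd (snd \<omega>) $ j) * jbr (snd (snd \<omega>)) powr (- 2 * r - 2)))\<bar>
      \<le> 2 * r * chi_bound * ?X^(bracket_degree + bracket_degree + 3)"
  proof -
    have "\<bar>chi \<omega> * (fst (snd \<omega>) \<bullet> snd (snd \<omega>)) * (jbr (fst (snd \<omega>)) powr (2 * s - 2) * ((- 2 * r) * (snd (snd \<omega>) $ j) * jbr (snd (snd \<omega>)) powr (- 2 * r - 2)))\<bar>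
        = \<bar>chi \<omega>\<bar> * \<bar>fst (snd \<omega>) \<bullet> snd (snd \<omega>)\<bar> * (jbr (fst (snd \<omega>)) powr (2 * s - 2) * ((2 * r) * \<bar>snd (snd \<omega>) $ j\<bar> * jbr (snd (snd \<omega>)) powr (- 2 * r - 2)))"
      using r0 by (simp add: abs_mult)
    also have "\<dots> \<le> chi_bound * ?X^2 * (?X^bracket_degree * ((2 * r) * ?X * ?X^bracket_degree))"
      using r0 by (intro mult_mono' chi_bounds pt_components_le jbr_powr_le_bracket_degree norm_pt_components_le mult_nonneg_nonneg) auto
    also have "\<dots> = 2 * r * chi_bound * ?X^(bracket_degree + bracket_degree + 3)"
      by (simp only: power_add power2_eq_square power3_eq_cube mult_ac)
    finally show ?thesis .
  qed
  have "\<bar>deta_multiplier j \<omega>\<bar> \<le> deta_chi_bound * ?X^(bracket_degree + bracket_degree + 3) + chi_bound * ?X^(bracket_degree + bracket_degree + 3) + 2 * r * chi_bound * ?X^(bracket_degree + bracket_degree + 3)"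
    unfolding deta_multiplier_def using t1 t2 t3 by linarith
  then show ?thesis by (simp add: algebra_simps)
qed

lemma abs_deta_fhat_sq_le: "\<bar>deta_fhat_sq j \<omega>\<bar> \<le> 2 * (cmod (vfhat f j \<omega>) * cmod (fhat f \<omega>))"
proof -
  have "\<bar>Re ((- \<i> * vfhat f j \<omega>) * cnj (fhat f \<omega>))\<bar> \<le> cmod ((- \<i> * vfhat f j \<omega>) * cnj (fhat f \<omega>))"
    by (rule abs_Re_le_cmod)
  also have "\<dots> = cmod (vfhat f j \<omega>) * cmod (fhat f \<omega>)" by (simp add: norm_mult)
  finally show ?thesis unfolding deta_fhat_sq_def by simp
qed

definition fhat_profile where "fhat_profile j \<omega> = cmod (vfhat f j \<omega>) * cmod (fhat f \<omega>) + cmod (fhat f \<omega>) * cmod (fhat f \<omega>)"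

lemma rapid_decay_fhat_profile: "rapid_decay (fhat_profile j)"
  unfolding fhat_profile_def
proof -
  have "rapid_decay (\<lambda>\<omega>. \<Sum>i\<in>{0::nat,1}. (if i = 0 then cmod (vfhat f j \<omega>) * cmod (fhat f \<omega>) else cmod (fhat f \<omega>) * cmod (fhat f \<omega>)))"
    by (intro rapid_decay_sum) (auto intro!: rapid_decay_mult rapid_decay_fhat rapid_decay_vfhat)
  then show "rapid_decay (\<lambda>\<omega>. cmod (vfhat f j \<omega>) * cmod (fhat f \<omega>) + cmod (fhat f \<omega>) * cmod (fhat f \<omega>))"
    by simp
qed

lemma fhat_profile_nonneg: "0 \<le> fhat_profile j \<omega>" unfolding fhat_profile_def by simp

lemma abs_flux_deriv_le: "\<bar>flux_deriv j \<omega>\<bar> \<le> (3 * chi_bound + deta_chi_bound + 2 * r * chi_bound) * ((1 + (norm \<omega>)\<^sup>2)^(bracket_degree + bracket_degree + 4) * fhat_profile j \<omega>)"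
proof -
  let ?X = "1 + (norm \<omega>)\<^sup>2"
  let ?cv = "cmod (vfhat f j \<omega>)" and ?cf = "cmod (fhat f \<omega>)"
  have X1: "1 \<le> ?X" by simp
  have p1: "\<bar>multiplier \<omega> * deta_fhat_sq j \<omega>\<bar> \<le> chi_bound * ?X^(bracket_degree + bracket_degree + 2) * (2 * (?cv * ?cf))"
    unfolding abs_mult by (intro mult_mono' abs_multiplier_le abs_deta_fhat_sq_le) auto
  have p2: "\<bar>deta_multiplier j \<omega> * fhat_sq \<omega>\<bar> \<le> (deta_chi_bound + chi_bound + 2 * r * chi_bound) * ?X^(bracket_degree + bracket_degree + 3) * (?cf * ?cf)"
    unfolding abs_mult fhat_sq_def by (intro mult_mono' abs_deta_multiplier_le) (auto simp: power2_eq_square)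
  have q1: "chi_bound * ?X^(bracket_degree + bracket_degree + 2) * (2 * (?cv * ?cf)) \<le> 2 * chi_bound * ?X^(bracket_degree + bracket_degree + 3) * (?cv * ?cf + ?cf * ?cf)"
  proof -
    have "?X^(bracket_degree + bracket_degree + 2) \<le> ?X^(bracket_degree + bracket_degree + 3)" by (rule one_plus_power2_norm_power_mono) simp
    then have "chi_bound * ?X^(bracket_degree + bracket_degree + 2) * (2 * (?cv * ?cf)) \<le> chi_bound * ?X^(bracket_degree + bracket_degree + 3) * (2 * (?cv * ?cf))"
      using chi_bounds(3) by (intro mult_right_mono mult_left_mono) auto
    also have "\<dots> \<le> chi_bound * ?X^(bracket_degree + bracket_degree + 3) * (2 * (?cv * ?cf + ?cf * ?cf))"
      using chi_bounds(3) by (intro mult_left_mono) auto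
    finally show ?thesis by (simp only: mult_ac)
  qed
  have q2: "(deta_chi_bound + chi_bound + 2 * r * chi_bound) * ?X^(bracket_degree + bracket_degree + 3) * (?cf * ?cf) \<le> (deta_chi_bound + chi_bound + 2 * r * chi_bound) * ?X^(bracket_degree + bracket_degree + 3) * (?cv * ?cf + ?cf * ?cf)"
    using chi_bounds(3,4) r0 by (intro mult_left_mono) auto
  have "\<bar>flux_deriv j \<omega>\<bar> = \<bar>fst (snd \<omega>) $ j\<bar> * \<bar>multiplier \<omega> * deta_fhat_sq j \<omega> + deta_multiplier j \<omega> * fhat_sq \<omega>\<bar>"
    unfolding flux_deriv_def abs_mult ..
  also have "\<dots> \<le> ?X * ((3 * chi_bound + deta_chi_bound + 2 * r * chi_bound) * ?X^(bracket_degree + bracket_degree + 3) * (?cv * ?cf + ?cf * ?cf))"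
  proof (rule mult_mono')
    have "\<bar>multiplier \<omega> * deta_fhat_sq j \<omega> + deta_multiplier j \<omega> * fhat_sq \<omega>\<bar> \<le> 2 * chi_bound * ?X^(bracket_degree + bracket_degree + 3) * (?cv * ?cf + ?cf * ?cf) + (deta_chi_bound + chi_bound + 2 * r * chi_bound) * ?X^(bracket_degree + bracket_degree + 3) * (?cv * ?cf + ?cf * ?cf)"
      using p1 p2 q1 q2 by linarith
    then show "\<bar>multiplier \<omega> * deta_fhat_sq j \<omega> + deta_multiplier j \<omega> * fhat_sq \<omega>\<bar> \<le> (3 * chi_bound + deta_chi_bound + 2 * r * chi_bound) * ?X^(bracket_degree + bracket_degree + 3) * (?cv * ?cf + ?cf * ?cf)"
      by (simp add: algebra_simps)
  qed (auto intro: pt_components_le)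
  also have "\<dots> = (3 * chi_bound + deta_chi_bound + 2 * r * chi_bound) * (?X^(bracket_degree + bracket_degree + 4) * fhat_profile j \<omega>)"
  proof -
    have "bracket_degree + bracket_degree + 4 = Suc (bracket_degree + bracket_degree + 3)" by simp
    then have "?X^(bracket_degree + bracket_degree + 4) = ?X * ?X^(bracket_degree + bracket_degree + 3)"
      by (simp only: power_Suc)
    then show ?thesis unfolding fhat_profile_def by (simp only: mult_ac)
  qed
  finally show ?thesis .
qed

lemma flux_deriv_borel_measurable: "flux_deriv j \<in> borel_measurable lborel"
  unfolding flux_deriv_def multiplier_def bracket_factor_def deta_multiplier_def deta_fhat_sq_def fhat_sq_def measurable_lborel2 by measurable

lemma integrable_flux_deriv: "integrable lborel (flux_deriv j)"
  by (rule integrable_by_rapid_decay[OF flux_deriv_borel_measurable rapid_decay_fhat_profile, of _ "3 * chi_bound + deta_chi_bound + 2 * r * chi_bound" "bracket_degree + bracket_degree + 4"])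
     (use abs_flux_deriv_le chi_bounds r0 in auto)

lemma integrable_flux: "integrable lborel (flux j)"
proof -
  have "integrable lborel (\<lambda>\<omega>. (fst (snd \<omega>) $ j * multiplier \<omega>) * (cmod (fhat f \<omega>))\<^sup>2)"
  proof (rule integrable_weight_fhat_sq)
    fix \<omega> :: "'d pt"
    have "\<bar>fst (snd \<omega>) $ j * multiplier \<omega>\<bar>
        \<le> (1 + (norm \<omega>)\<^sup>2) * (chi_bound * (1 + (norm \<omega>)\<^sup>2)^(bracket_degree + bracket_degree + 2))"
      unfolding abs_mult by (intro mult_mono' pt_components_le abs_multiplier_le) auto
    then show "\<bar>fst (snd \<omega>) $ j * multiplier \<omega>\<bar> \<le> chi_bound * (1 + (norm \<omega>)\<^sup>2)^(bracket_degree + bracket_degree + 3)"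
      by (simp only: power_add power2_eq_square power3_eq_cube mult_ac)
  qed (simp add: multiplier_def bracket_factor_def)
  moreover have "flux j = (\<lambda>\<omega>. (fst (snd \<omega>) $ j * multiplier \<omega>) * (cmod (fhat f \<omega>))\<^sup>2)"
    by (simp add: fun_eq_iff flux_def fhat_sq_def mult.assoc)
  ultimately show ?thesis by simp
qed

lemma integral_flux_deriv_eq_0: "integral\<^sup>L lborel (flux_deriv j) = 0"
proof -
  define M where "M = DIM('d pt) + 2"
  obtain C where C: "\<And>\<omega>::'d pt. (1 + (norm \<omega>)\<^sup>2)^(bracket_degree + bracket_degree + 4) * fhat_profile j \<omega> \<le> C * inverse ((1 + (norm \<omega>)\<^sup>2)^M)"
    using rapid_decay_bound[OF rapid_decay_fhat_profile] by blast
  define A where "A = 3 * chi_bound + deta_chi_bound + 2 * r * chi_bound"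
  have A0: "0 \<le> A" unfolding A_def using chi_bounds r0 by auto
  have DB: "\<bar>flux_deriv j \<omega>\<bar> \<le> A * C * inverse ((1 + (norm \<omega>)\<^sup>2)^M)" for \<omega>
  proof -
    have "\<bar>flux_deriv j \<omega>\<bar> \<le> A * ((1 + (norm \<omega>)\<^sup>2)^(bracket_degree + bracket_degree + 4) * fhat_profile j \<omega>)" unfolding A_def by (rule abs_flux_deriv_le)
    also have "\<dots> \<le> A * (C * inverse ((1 + (norm \<omega>)\<^sup>2)^M))" by (rule mult_left_mono[OF C A0])
    finally show ?thesis by (simp only: mult_ac)
  qed
  have C0: "0 \<le> C" using C[of 0] fhat_profile_nonneg[of j 0] by (simp add: M_def)
  show ?thesis
  proof (rule integral_directional_derivative_eq_0[OF integrable_flux flux_deriv_borel_measurable _ has_vector_derivative_flux])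
    show "integrable lborel (\<lambda>\<omega>::'d pt. A * C * 3^M * inverse ((1 + (norm \<omega>)\<^sup>2)^M))"
      unfolding M_def by (intro integrable_mult_right integrable_inverse_power_one_plus_norm_sq) simp
    fix x :: "'d pt" and s :: real assume s: "\<bar>s\<bar> \<le> 1"
    have "norm (flux_deriv j (x + s *\<^sub>R eta_axis j)) \<le> A * C * inverse ((1 + (norm (x + s *\<^sub>R eta_axis j))\<^sup>2)^M)"
      using DB by simp
    also have "\<dots> \<le> A * C * (3^M * inverse ((1 + (norm x)\<^sup>2)^M))"
      using A0 C0 by (intro mult_left_mono inverse_power_shift_le s norm_eta_axis) auto
    finally show "norm (flux_deriv j (x + s *\<^sub>R eta_axis j)) \<le> A * C * 3^M * inverse ((1 + (norm x)\<^sup>2)^M)"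
      by (simp add: mult_ac)
  qed
qed

definition xi_grad_multiplier where "xi_grad_multiplier \<omega> = (\<Sum>j\<in>UNIV. fst (snd \<omega>) $ j * deta_multiplier j \<omega>)"

lemma xi_grad_multiplier_eq: "xi_grad_multiplier \<omega> = (fst (snd \<omega>) \<bullet> grad_eta chi \<omega>) * (fst (snd \<omega>) \<bullet> snd (snd \<omega>)) * bracket_factor \<omega>
   + chi \<omega> * (fst (snd \<omega>) \<bullet> fst (snd \<omega>)) * bracket_factor \<omega>
   + chi \<omega> * (fst (snd \<omega>) \<bullet> snd (snd \<omega>)) * (jbr (fst (snd \<omega>)) powr (2 * s - 2) * ((- 2 * r) * (fst (snd \<omega>) \<bullet> snd (snd \<omega>)) * jbr (snd (snd \<omega>)) powr (- 2 * r - 2)))"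
proof -
  let ?x = "fst (snd \<omega>)" and ?y = "snd (snd \<omega>)"
  have a: "?x \<bullet> grad_eta chi \<omega> = (\<Sum>j\<in>UNIV. ?x $ j * deta chi j \<omega>)" unfolding inner_vec_def grad_eta_def by simp
  have b: "?x \<bullet> ?x = (\<Sum>j\<in>UNIV. ?x $ j * ?x $ j)" unfolding inner_vec_def by simp
  have c: "?x \<bullet> ?y = (\<Sum>j\<in>UNIV. ?x $ j * ?y $ j)" unfolding inner_vec_def by simp
  have distribute: "(\<Sum>j\<in>UNIV. x j * (g j * p * B + c * x j * B + c * p * (A * (k * y j * C))))
      = (\<Sum>j\<in>UNIV. x j * g j) * p * B + c * (\<Sum>j\<in>UNIV. x j * x j) * B
        + c * p * (A * (k * (\<Sum>j\<in>UNIV. x j * y j) * C))"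
    for x g y :: "'d \<Rightarrow> real" and p B c A k C :: real
    by (simp add: sum.distrib distrib_left sum_distrib_left sum_distrib_right mult_ac)
  show ?thesis
    unfolding xi_grad_multiplier_def deta_multiplier_def a b
    by (subst distribute) (simp add: c)
qed

definition eta_lhs where "eta_lhs \<omega> = chi \<omega> * (norm (fst (snd \<omega>)))\<^sup>2 * jbr (fst (snd \<omega>)) powr (2 * s - 2) * jbr (snd (snd \<omega>)) powr (- 2 - 2 * r)
        * (1 + (1 - 2 * r) * (norm (snd (snd \<omega>)))\<^sup>2) * (cmod (fhat f \<omega>))\<^sup>2"

definition eta_rhs where "eta_rhs \<omega> = norm (grad_eta chi \<omega>) * jbr (fst (snd \<omega>)) powr (2 * s) * jbr (snd (snd \<omega>)) powr (1 - 2 * r) * (cmod (fhat f \<omega>))\<^sup>2"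

lemma eta_lhs_le: "eta_lhs \<omega> \<le> xi_grad_multiplier \<omega> * fhat_sq \<omega> + eta_rhs \<omega>"
proof -
  let ?x = "fst (snd \<omega>)" and ?y = "snd (snd \<omega>)" and ?g = "grad_eta chi \<omega>"
  define a where "a = jbr ?x powr (2 * s - 2)"
  define b2 where "b2 = jbr ?y powr (- 2 * r - 2)"
  define c2 where "c2 = jbr ?y powr (- 2 * r)"
  have c2e: "c2 = b2 * (1 + (norm ?y)\<^sup>2)"
    unfolding c2_def b2_def using jbr_powr_shift[of ?y "- 2 * r - 2"] by simp
  have aE: "jbr ?x powr (2 * s) = a * (1 + (norm ?x)\<^sup>2)"
    unfolding a_def using jbr_powr_shift[of ?x "2 * s - 2"] by simp
  have jE: "jbr ?y powr (1 - 2 * r) = jbr ?y * c2"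
  proof -
    have "jbr ?y powr (1 + (- 2 * r)) = jbr ?y powr 1 * jbr ?y powr (- 2 * r)" by (rule powr_add)
    then show ?thesis unfolding c2_def using jbr_pos[of ?y] by simp
  qed
  have ne: "norm ?y \<le> jbr ?y" unfolding jbr_def by (simp add: real_le_rsqrt)
  have key: "chi \<omega> * (norm ?x)\<^sup>2 * a * b2 * (1 + (1 - 2 * r) * (norm ?y)\<^sup>2)
     \<le> (?x \<bullet> ?g) * (?x \<bullet> ?y) * (a * c2) + chi \<omega> * (norm ?x)\<^sup>2 * (a * c2)
       + chi \<omega> * (?x \<bullet> ?y) * (a * ((- 2 * r) * (?x \<bullet> ?y) * b2)) + norm ?g * (a * (1 + (norm ?x)\<^sup>2)) * (jbr ?y * c2)"
    by (rule eta_density_ineq) (auto simp: chi0 r0 a_def b2_def Cauchy_Schwarz_ineq2 ne c2e)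
  have N0: "0 \<le> fhat_sq \<omega>" unfolding fhat_sq_def by simp
  have "eta_lhs \<omega> = (chi \<omega> * (norm ?x)\<^sup>2 * a * b2 * (1 + (1 - 2 * r) * (norm ?y)\<^sup>2)) * fhat_sq \<omega>"
  proof -
    have e: "- 2 - 2 * r = - 2 * r - 2" by simp
    show ?thesis unfolding eta_lhs_def fhat_sq_def a_def b2_def e by (simp only: mult_ac)
  qed
  also have "\<dots> \<le> ((?x \<bullet> ?g) * (?x \<bullet> ?y) * (a * c2) + chi \<omega> * (norm ?x)\<^sup>2 * (a * c2)
       + chi \<omega> * (?x \<bullet> ?y) * (a * ((- 2 * r) * (?x \<bullet> ?y) * b2)) + norm ?g * (a * (1 + (norm ?x)\<^sup>2)) * (jbr ?y * c2)) * fhat_sq \<omega>"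
    by (rule mult_right_mono[OF key N0])
  also have "\<dots> = xi_grad_multiplier \<omega> * fhat_sq \<omega> + eta_rhs \<omega>"
  proof -
    have PE: "xi_grad_multiplier \<omega> = (?x \<bullet> ?g) * (?x \<bullet> ?y) * (a * c2) + chi \<omega> * (norm ?x)\<^sup>2 * (a * c2)
       + chi \<omega> * (?x \<bullet> ?y) * (a * ((- 2 * r) * (?x \<bullet> ?y) * b2))"
      unfolding xi_grad_multiplier_eq bracket_factor_def a_def c2_def b2_def by (simp add: power2_norm_eq_inner)
    have RE: "eta_rhs \<omega> = norm ?g * (a * (1 + (norm ?x)\<^sup>2)) * (jbr ?y * c2) * fhat_sq \<omega>"
      unfolding eta_rhs_def fhat_sq_def aE jE ..
    show ?thesis unfolding PE RE by (simp add: algebra_simps)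
  qed
  finally show ?thesis .
qed

lemma integrable_eta_lhs: "integrable lborel eta_lhs"
proof -
  show ?thesis
  proof (rule integrable_by_rapid_decay[OF _ rapid_decay_mult[OF rapid_decay_fhat rapid_decay_fhat norm_ge_zero norm_ge_zero], of _ "chi_bound * (1 + \<bar>1 - 2 * r\<bar>)" "bracket_degree + bracket_degree + 2"])
    show "eta_lhs \<in> borel_measurable lborel" unfolding eta_lhs_def measurable_lborel2 by measurable
    show "0 \<le> chi_bound * (1 + \<bar>1 - 2 * r\<bar>)" using chi_bounds by simp
    fix \<omega> :: "'d pt"
    let ?X = "1 + (norm \<omega>)\<^sup>2"
    have x2: "(norm (fst (snd \<omega>)))\<^sup>2 \<le> ?X"
    proof -
      have "(norm (fst (snd \<omega>)))\<^sup>2 \<le> (norm \<omega>)\<^sup>2" using norm_pt_components_le(2)[of \<omega>] by (intro power_mono) auto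
      then show ?thesis by linarith
    qed
    have y2: "\<bar>1 + (1 - 2 * r) * (norm (snd (snd \<omega>)))\<^sup>2\<bar> \<le> (1 + \<bar>1 - 2 * r\<bar>) * ?X"
    proof -
      have "(norm (snd (snd \<omega>)))\<^sup>2 \<le> (norm \<omega>)\<^sup>2" using norm_pt_components_le(3)[of \<omega>] by (intro power_mono) auto
      then have "(norm (snd (snd \<omega>)))\<^sup>2 \<le> ?X" by linarith
      then have "\<bar>1 - 2 * r\<bar> * (norm (snd (snd \<omega>)))\<^sup>2 \<le> \<bar>1 - 2 * r\<bar> * ?X" by (rule mult_left_mono) simp
      moreover have "\<bar>1 + (1 - 2 * r) * (norm (snd (snd \<omega>)))\<^sup>2\<bar> \<le> 1 + \<bar>1 - 2 * r\<bar> * (norm (snd (snd \<omega>)))\<^sup>2"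
        by (rule order_trans[OF abs_triangle_ineq]) (simp add: abs_mult)
      moreover have "1 + \<bar>1 - 2 * r\<bar> * ?X \<le> (1 + \<bar>1 - 2 * r\<bar>) * ?X" by (simp add: algebra_simps)
      ultimately show ?thesis by linarith
    qed
    have ja: "jbr (fst (snd \<omega>)) powr (2 * s - 2) \<le> ?X^bracket_degree"
      by (rule jbr_powr_le_bracket_degree[OF _ norm_pt_components_le(2)]) (simp add: add_nonneg_nonneg)
    have jb: "jbr (snd (snd \<omega>)) powr (- 2 - 2 * r) \<le> ?X^bracket_degree"
    proof (rule jbr_powr_le_bracket_degree[OF _ norm_pt_components_le(3)])
      have "\<bar>- 2 - 2 * r\<bar> = 2 * r + 2" using r0 by simp
      also have "\<dots> \<le> \<bar>2 * r\<bar> + 2" by simp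
      also have "\<dots> \<le> \<bar>2 * s - 2\<bar> + \<bar>2 * r\<bar> + \<bar>2 * s\<bar> + \<bar>1 - 2 * r\<bar> + 2" by (simp add: add_nonneg_nonneg)
      finally show "\<bar>- 2 - 2 * r\<bar> \<le> \<bar>2 * s - 2\<bar> + \<bar>2 * r\<bar> + \<bar>2 * s\<bar> + \<bar>1 - 2 * r\<bar> + 2" .
    qed
    have "norm (eta_lhs \<omega>) = \<bar>chi \<omega>\<bar> * (norm (fst (snd \<omega>)))\<^sup>2 * jbr (fst (snd \<omega>)) powr (2 * s - 2) * jbr (snd (snd \<omega>)) powr (- 2 - 2 * r)
        * \<bar>1 + (1 - 2 * r) * (norm (snd (snd \<omega>)))\<^sup>2\<bar> * (cmod (fhat f \<omega>) * cmod (fhat f \<omega>))"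
      unfolding eta_lhs_def by (simp add: abs_mult power2_eq_square)
    also have "\<dots> \<le> chi_bound * ?X * ?X^bracket_degree * ?X^bracket_degree * ((1 + \<bar>1 - 2 * r\<bar>) * ?X) * (cmod (fhat f \<omega>) * cmod (fhat f \<omega>))"
      by (intro mult_mono' chi_bounds x2 y2 ja jb order_refl) auto
    also have "\<dots> = chi_bound * (1 + \<bar>1 - 2 * r\<bar>) * (?X^(bracket_degree + bracket_degree + 2) * (cmod (fhat f \<omega>) * cmod (fhat f \<omega>)))"
      by (simp only: power_add power2_eq_square mult_ac)
    finally show "norm (eta_lhs \<omega>) \<le> chi_bound * (1 + \<bar>1 - 2 * r\<bar>) * (?X^(bracket_degree + bracket_degree + 2) * (cmod (fhat f \<omega>) * cmod (fhat f \<omega>)))" .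
  qed
qed

lemma integrable_eta_rhs: "integrable lborel eta_rhs"
proof -
  obtain Bg where Bg: "\<And>p. norm (grad_eta chi p) \<le> Bg" using norm_grad_eta_chi_bounded by blast
  have Bg0: "0 \<le> Bg" using Bg[of 0] norm_ge_zero[of "grad_eta chi 0"] by linarith
  show ?thesis
  proof (rule integrable_by_rapid_decay[OF _ rapid_decay_mult[OF rapid_decay_fhat rapid_decay_fhat norm_ge_zero norm_ge_zero], of _ Bg "bracket_degree + bracket_degree"])
    show "eta_rhs \<in> borel_measurable lborel" unfolding eta_rhs_def measurable_lborel2 by measurable
    show "0 \<le> Bg" by (rule Bg0)
    fix \<omega> :: "'d pt"
    let ?X = "1 + (norm \<omega>)\<^sup>2"
    have ja: "jbr (fst (snd \<omega>)) powr (2 * s) \<le> ?X^bracket_degree"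
      by (rule jbr_powr_le_bracket_degree[OF _ norm_pt_components_le(2)]) (simp add: add_nonneg_nonneg)
    have jb: "jbr (snd (snd \<omega>)) powr (1 - 2 * r) \<le> ?X^bracket_degree"
      by (rule jbr_powr_le_bracket_degree[OF _ norm_pt_components_le(3)]) (simp add: add_nonneg_nonneg)
    have "norm (eta_rhs \<omega>) = norm (grad_eta chi \<omega>) * jbr (fst (snd \<omega>)) powr (2 * s) * jbr (snd (snd \<omega>)) powr (1 - 2 * r) * (cmod (fhat f \<omega>) * cmod (fhat f \<omega>))"
      unfolding eta_rhs_def by (simp add: abs_mult power2_eq_square)
    also have "\<dots> \<le> Bg * ?X^bracket_degree * ?X^bracket_degree * (cmod (fhat f \<omega>) * cmod (fhat f \<omega>))"
      by (intro mult_mono' Bg ja jb order_refl) auto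
    also have "\<dots> = Bg * (?X^(bracket_degree + bracket_degree) * (cmod (fhat f \<omega>) * cmod (fhat f \<omega>)))"
      by (simp only: power_add mult_ac)
    finally show "norm (eta_rhs \<omega>) \<le> Bg * (?X^(bracket_degree + bracket_degree) * (cmod (fhat f \<omega>) * cmod (fhat f \<omega>)))" .
  qed
qed

lemma sum_flux_deriv_eq:
  "(\<Sum>j\<in>UNIV. flux_deriv j \<omega>) = xi_grad_multiplier \<omega> * fhat_sq \<omega>
    - 2 * Re (of_real (multiplier \<omega>) * Xop u f \<omega> * cnj (fhat f \<omega>))
    - 2 * Im (of_real (multiplier \<omega>) * xi_dot_uconv u \<omega> * cnj (fhat f \<omega>))"
proof -
  define a where "a = fhat f \<omega>"
  define V where "V = xi_dot_vfhat \<omega>"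
  define U where "U = xi_dot_uconv u \<omega>"
  have s1: "(\<Sum>j\<in>UNIV. flux_deriv j \<omega>)
      = multiplier \<omega> * (\<Sum>j\<in>UNIV. fst (snd \<omega>) $ j * deta_fhat_sq j \<omega>) + xi_grad_multiplier \<omega> * fhat_sq \<omega>"
    unfolding flux_deriv_def xi_grad_multiplier_def
    by (simp add: sum.distrib sum_distrib_left sum_distrib_right algebra_simps)
  have s2: "(\<Sum>j\<in>UNIV. fst (snd \<omega>) $ j * deta_fhat_sq j \<omega>) = 2 * Im (V * cnj a)"
  proof -
    have "V * cnj a = (\<Sum>j\<in>UNIV. of_real (fst (snd \<omega>) $ j) * (vfhat f j \<omega> * cnj a))"
      unfolding V_def xi_dot_vfhat_def by (simp add: sum_distrib_right sum_distrib_left mult_ac)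
    moreover have "Im (complex_of_real x * z) = x * Im z" for x z by simp
    ultimately have Im_V: "Im (V * cnj a) = (\<Sum>j\<in>UNIV. fst (snd \<omega>) $ j * Im (vfhat f j \<omega> * cnj a))"
      by (simp only: Im_sum)
    have "deta_fhat_sq j \<omega> = 2 * Im (vfhat f j \<omega> * cnj a)" for j
      unfolding deta_fhat_sq_def a_def by simp
    then have "(\<Sum>j\<in>UNIV. fst (snd \<omega>) $ j * deta_fhat_sq j \<omega>)
        = (\<Sum>j\<in>UNIV. 2 * (fst (snd \<omega>) $ j * Im (vfhat f j \<omega> * cnj a)))"
      by (simp only: mult_ac)
    then show ?thesis unfolding Im_V by (simp only: sum_distrib_left)
  qed
  have s3: "Re (of_real (multiplier \<omega>) * Xop u f \<omega> * cnj a) = - multiplier \<omega> * (Im (V * cnj a) + Im (U * cnj a))"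
  proof -
    have "of_real (multiplier \<omega>) * Xop u f \<omega> * cnj a
        = of_real (multiplier \<omega>) * (\<i> * (of_real (fst \<omega>) * (a * cnj a) + V * cnj a + U * cnj a))"
      unfolding Xop_eq_i_mult V_def U_def a_def by (simp add: algebra_simps)
    then show ?thesis by (simp add: algebra_simps)
  qed
  have s4: "Im (of_real (multiplier \<omega>) * U * cnj a) = multiplier \<omega> * Im (U * cnj a)"
    by (simp add: mult.assoc)
  show ?thesis
    unfolding s1 s2 a_def[symmetric] V_def[symmetric] U_def[symmetric] using s3 s4 by (simp add: algebra_simps)
qed

lemma integrable_multiplier_Xop:
  assumes "integrable lborel (\<lambda>\<omega>. of_real (multiplier \<omega>) * xi_dot_uconv u \<omega> * cnj (fhat f \<omega>))"
  shows "integrable lborel (\<lambda>\<omega>. of_real (multiplier \<omega>) * Xop u f \<omega> * cnj (fhat f \<omega>))"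
proof -
  have eq: "(\<lambda>\<omega>. of_real (multiplier \<omega>) * Xop u f \<omega> * cnj (fhat f \<omega>))
      = (\<lambda>\<omega>. \<i> * (of_real (multiplier \<omega> * fst \<omega> * fhat_sq \<omega>)
          + of_real (multiplier \<omega>) * xi_dot_vfhat \<omega> * cnj (fhat f \<omega>)
          + of_real (multiplier \<omega>) * xi_dot_uconv u \<omega> * cnj (fhat f \<omega>)))"
  proof
    fix \<omega>
    have "fhat f \<omega> * cnj (fhat f \<omega>) = of_real (fhat_sq \<omega>)" unfolding fhat_sq_def by (metis complex_norm_square)
    then show "of_real (multiplier \<omega>) * Xop u f \<omega> * cnj (fhat f \<omega>)
      = \<i> * (of_real (multiplier \<omega> * fst \<omega> * fhat_sq \<omega>)
          + of_real (multiplier \<omega>) * xi_dot_vfhat \<omega> * cnj (fhat f \<omega>)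
          + of_real (multiplier \<omega>) * xi_dot_uconv u \<omega> * cnj (fhat f \<omega>))"
      unfolding Xop_eq_i_mult by (simp add: algebra_simps)
  qed
  have T1: "integrable lborel (\<lambda>\<omega>. complex_of_real (multiplier \<omega> * fst \<omega> * fhat_sq \<omega>))"
    unfolding fhat_sq_def
  proof (rule integrable_of_real, rule integrable_weight_fhat_sq)
    fix \<omega> :: "'d pt"
    have "\<bar>multiplier \<omega> * fst \<omega>\<bar>
        \<le> (chi_bound * (1 + (norm \<omega>)\<^sup>2)^(bracket_degree + bracket_degree + 2)) * (1 + (norm \<omega>)\<^sup>2)"
      unfolding abs_mult by (intro mult_mono' pt_components_le abs_multiplier_le) (auto intro: chi_bounds)
    then show "\<bar>multiplier \<omega> * fst \<omega>\<bar> \<le> chi_bound * (1 + (norm \<omega>)\<^sup>2)^(bracket_degree + bracket_degree + 3)"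
      by (simp only: power_add power2_eq_square power3_eq_cube mult_ac)
  qed (simp add: multiplier_def bracket_factor_def)
  have T2: "integrable lborel (\<lambda>\<omega>. of_real (multiplier \<omega>) * xi_dot_vfhat \<omega> * cnj (fhat f \<omega>))"
    by (rule integrable_weight_xi_dot_vfhat[OF _ abs_multiplier_le]) (simp add: multiplier_def bracket_factor_def)
  show ?thesis
    unfolding eq
    by (rule integrable_mult_right, rule Bochner_Integration.integrable_add[OF Bochner_Integration.integrable_add[OF T1 T2] assms])
qed

lemma integral_xi_grad_multiplier:
  assumes B: "integrable lborel (\<lambda>\<omega>. of_real (multiplier \<omega>) * xi_dot_uconv u \<omega> * cnj (fhat f \<omega>))"
  shows "integrable lborel (\<lambda>\<omega>. xi_grad_multiplier \<omega> * fhat_sq \<omega>)"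
    and "integral\<^sup>L lborel (\<lambda>\<omega>. xi_grad_multiplier \<omega> * fhat_sq \<omega>)
      = 2 * Re (LINT \<omega>|lborel. of_real (multiplier \<omega>) * Xop u f \<omega> * cnj (fhat f \<omega>))
        + 2 * Im (LINT \<omega>|lborel. of_real (multiplier \<omega>) * xi_dot_uconv u \<omega> * cnj (fhat f \<omega>))"
proof -
  define A where "A \<omega> = of_real (multiplier \<omega>) * Xop u f \<omega> * cnj (fhat f \<omega>)" for \<omega>
  define B1 where "B1 \<omega> = of_real (multiplier \<omega>) * xi_dot_uconv u \<omega> * cnj (fhat f \<omega>)" for \<omega>
  have iA: "integrable lborel A" unfolding A_def by (rule integrable_multiplier_Xop[OF B])
  have iB: "integrable lborel B1" unfolding B1_def by (rule B)
  have iF: "integrable lborel (\<lambda>\<omega>. \<Sum>j\<in>UNIV. flux_deriv j \<omega>)"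
    by (intro Bochner_Integration.integrable_sum integrable_flux_deriv)
  have eq: "(\<lambda>\<omega>. xi_grad_multiplier \<omega> * fhat_sq \<omega>)
      = (\<lambda>\<omega>. (\<Sum>j\<in>UNIV. flux_deriv j \<omega>) + 2 * Re (A \<omega>) + 2 * Im (B1 \<omega>))"
    using sum_flux_deriv_eq[of _ u] unfolding A_def B1_def by (auto simp: fun_eq_iff)
  show "integrable lborel (\<lambda>\<omega>. xi_grad_multiplier \<omega> * fhat_sq \<omega>)"
    unfolding eq using iF iA iB by (intro Bochner_Integration.integrable_add integrable_mult_right integrable_Re integrable_Im)
  have "integral\<^sup>L lborel (\<lambda>\<omega>. \<Sum>j\<in>UNIV. flux_deriv j \<omega>) = 0"
    using integral_flux_deriv_eq_0 by (subst Bochner_Integration.integral_sum) (auto intro: integrable_flux_deriv)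
  then show "integral\<^sup>L lborel (\<lambda>\<omega>. xi_grad_multiplier \<omega> * fhat_sq \<omega>)
      = 2 * Re (integral\<^sup>L lborel A) + 2 * Im (integral\<^sup>L lborel B1)"
    unfolding eq using iF integrable_Re[OF iA] integrable_Im[OF iB] integral_Re[OF iA] integral_Im[OF iB]
    by simp
qed

lemma eta_inequality:
  fixes u :: "real \<times> (real^'d) \<Rightarrow> real^'d"
  assumes int1: "integrable lborel (\<lambda>(\<tau>, \<xi>, \<eta>).
       complex_of_real (chi (\<tau>, \<xi>, \<eta>) * (\<xi> \<bullet> \<eta>) * jbr \<xi> powr (2 * s - 2) * jbr \<eta> powr (- 2 * r))
       * (\<Sum>j\<in>UNIV. of_real (\<xi> $ j) * uconv u f j (\<tau>, \<xi>, \<eta>)) * cnj (fhat f (\<tau>, \<xi>, \<eta>)))"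
  shows "(LINT \<omega>|lborel. (case \<omega> of (\<tau>, \<xi>, \<eta>) \<Rightarrow>
        chi \<omega> * (norm \<xi>)\<^sup>2 * jbr \<xi> powr (2 * s - 2) * jbr \<eta> powr (- 2 - 2 * r)
        * (1 + (1 - 2 * r) * (norm \<eta>)\<^sup>2) * (cmod (fhat f \<omega>))\<^sup>2))
    \<le> (LINT \<omega>|lborel. (case \<omega> of (\<tau>, \<xi>, \<eta>) \<Rightarrow>
        norm (grad_eta chi \<omega>) * jbr \<xi> powr (2 * s) * jbr \<eta> powr (1 - 2 * r) * (cmod (fhat f \<omega>))\<^sup>2))
      + 2 * cmod (LINT \<omega>|lborel. (case \<omega> of (\<tau>, \<xi>, \<eta>) \<Rightarrow>
        complex_of_real (chi \<omega> * (\<xi> \<bullet> \<eta>) * jbr \<xi> powr (2 * s - 2) * jbr \<eta> powr (- 2 * r))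
        * Xop u f \<omega> * cnj (fhat f \<omega>)))
      + 2 * Im (LINT \<omega>|lborel. (case \<omega> of (\<tau>, \<xi>, \<eta>) \<Rightarrow>
        complex_of_real (chi \<omega> * (\<xi> \<bullet> \<eta>) * jbr \<xi> powr (2 * s - 2) * jbr \<eta> powr (- 2 * r))
        * (\<Sum>j\<in>UNIV. of_real (\<xi> $ j) * uconv u f j \<omega>) * cnj (fhat f \<omega>)))"
proof -
  define A where "A \<omega> = of_real (multiplier \<omega>) * Xop u f \<omega> * cnj (fhat f \<omega>)" for \<omega>
  define B1 where "B1 \<omega> = of_real (multiplier \<omega>) * xi_dot_uconv u \<omega> * cnj (fhat f \<omega>)" for \<omega>
  have eL: "(\<lambda>\<omega>. case \<omega> of (\<tau>, \<xi>, \<eta>) \<Rightarrow>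
        chi \<omega> * (norm \<xi>)\<^sup>2 * jbr \<xi> powr (2 * s - 2) * jbr \<eta> powr (- 2 - 2 * r)
        * (1 + (1 - 2 * r) * (norm \<eta>)\<^sup>2) * (cmod (fhat f \<omega>))\<^sup>2) = eta_lhs"
    by (auto simp: fun_eq_iff eta_lhs_def split: prod.splits)
  have eR: "(\<lambda>\<omega>. case \<omega> of (\<tau>, \<xi>, \<eta>) \<Rightarrow>
        norm (grad_eta chi \<omega>) * jbr \<xi> powr (2 * s) * jbr \<eta> powr (1 - 2 * r) * (cmod (fhat f \<omega>))\<^sup>2) = eta_rhs"
    by (auto simp: fun_eq_iff eta_rhs_def split: prod.splits)
  have eA: "(\<lambda>\<omega>. case \<omega> of (\<tau>, \<xi>, \<eta>) \<Rightarrow>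
        complex_of_real (chi \<omega> * (\<xi> \<bullet> \<eta>) * jbr \<xi> powr (2 * s - 2) * jbr \<eta> powr (- 2 * r))
        * Xop u f \<omega> * cnj (fhat f \<omega>)) = A"
    by (auto simp: fun_eq_iff A_def multiplier_def bracket_factor_def mult.assoc split: prod.splits)
  have eB: "(\<lambda>\<omega>. case \<omega> of (\<tau>, \<xi>, \<eta>) \<Rightarrow>
        complex_of_real (chi \<omega> * (\<xi> \<bullet> \<eta>) * jbr \<xi> powr (2 * s - 2) * jbr \<eta> powr (- 2 * r))
        * (\<Sum>j\<in>UNIV. of_real (\<xi> $ j) * uconv u f j \<omega>) * cnj (fhat f \<omega>)) = B1"
    by (auto simp: fun_eq_iff B1_def xi_dot_uconv_def multiplier_def bracket_factor_def mult.assoc split: prod.splits)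
  have "(\<lambda>(\<tau>, \<xi>, \<eta>).
       complex_of_real (chi (\<tau>, \<xi>, \<eta>) * (\<xi> \<bullet> \<eta>) * jbr \<xi> powr (2 * s - 2) * jbr \<eta> powr (- 2 * r))
       * (\<Sum>j\<in>UNIV. of_real (\<xi> $ j) * uconv u f j (\<tau>, \<xi>, \<eta>)) * cnj (fhat f (\<tau>, \<xi>, \<eta>))) = B1"
    by (auto simp: fun_eq_iff B1_def xi_dot_uconv_def multiplier_def bracket_factor_def mult.assoc split: prod.splits)
  then have iB: "integrable lborel B1" using int1 by simp
  note grad = integral_xi_grad_multiplier[OF iB[unfolded B1_def]]
  have "integral\<^sup>L lborel eta_lhs \<le> integral\<^sup>L lborel (\<lambda>\<omega>. xi_grad_multiplier \<omega> * fhat_sq \<omega> + eta_rhs \<omega>)"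
    by (rule Bochner_Integration.integral_mono[OF integrable_eta_lhs]) (use grad(1) integrable_eta_rhs eta_lhs_le in auto)
  also have "\<dots> = integral\<^sup>L lborel (\<lambda>\<omega>. xi_grad_multiplier \<omega> * fhat_sq \<omega>) + integral\<^sup>L lborel eta_rhs"
    using grad(1) integrable_eta_rhs by simp
  also have "\<dots> \<le> integral\<^sup>L lborel eta_rhs + 2 * cmod (integral\<^sup>L lborel A) + 2 * Im (integral\<^sup>L lborel B1)"
    using grad(2) complex_Re_le_cmod[of "integral\<^sup>L lborel A"] unfolding A_def B1_def by linarith
  finally show ?thesis unfolding eL eR eA eB .
qed

end

theorem lemma3p1:
  fixes u :: "real \<times> (real^'d::finite) \<Rightarrow> real^'d"
    and f chi :: "'d pt \<Rightarrow> real"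
    and s r :: real
  assumes f: "smooth_compact_support f"
    and chi: "smooth_bounded chi" "\<And>\<omega>. chi \<omega> \<ge> 0"
    and s: "s \<ge> 0" and r: "r \<ge> 0"
    and u_int: "\<And>j. integrable lborel (\<lambda>p::'d pt. u (fst p, fst (snd p)) $ j * f p)"
    and int1: "integrable lborel (\<lambda>(\<tau>, \<xi>, \<eta>).
       complex_of_real (chi (\<tau>, \<xi>, \<eta>) * (\<xi> \<bullet> \<eta>) * jbr \<xi> powr (2 * s - 2) * jbr \<eta> powr (- 2 * r))
       * (\<Sum>j\<in>UNIV. of_real (\<xi> $ j) * uconv u f j (\<tau>, \<xi>, \<eta>)) * cnj (fhat f (\<tau>, \<xi>, \<eta>)))"
    and int2: "integrable lborel (\<lambda>(\<tau>, \<xi>, \<eta>).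
       complex_of_real (chi (\<tau>, \<xi>, \<eta>) * \<tau> * jbr \<tau> powr (2 * s - 2) * jbr \<eta> powr (- 2 * r))
       * (\<Sum>j\<in>UNIV. of_real (\<xi> $ j) * uconv u f j (\<tau>, \<xi>, \<eta>)) * cnj (fhat f (\<tau>, \<xi>, \<eta>)))"
  shows
   "((LINT \<omega>|lborel. (case \<omega> of (\<tau>, \<xi>, \<eta>) \<Rightarrow>
        chi \<omega> * (norm \<xi>)\<^sup>2 * jbr \<xi> powr (2 * s - 2) * jbr \<eta> powr (- 2 - 2 * r)
        * (1 + (1 - 2 * r) * (norm \<eta>)\<^sup>2) * (cmod (fhat f \<omega>))\<^sup>2))
    \<le> (LINT \<omega>|lborel. (case \<omega> of (\<tau>, \<xi>, \<eta>) \<Rightarrow>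
        norm (grad_eta chi \<omega>) * jbr \<xi> powr (2 * s) * jbr \<eta> powr (1 - 2 * r) * (cmod (fhat f \<omega>))\<^sup>2))
      + 2 * cmod (LINT \<omega>|lborel. (case \<omega> of (\<tau>, \<xi>, \<eta>) \<Rightarrow>
        complex_of_real (chi \<omega> * (\<xi> \<bullet> \<eta>) * jbr \<xi> powr (2 * s - 2) * jbr \<eta> powr (- 2 * r))
        * Xop u f \<omega> * cnj (fhat f \<omega>)))
      + 2 * Im (LINT \<omega>|lborel. (case \<omega> of (\<tau>, \<xi>, \<eta>) \<Rightarrow>
        complex_of_real (chi \<omega> * (\<xi> \<bullet> \<eta>) * jbr \<xi> powr (2 * s - 2) * jbr \<eta> powr (- 2 * r))
        * (\<Sum>j\<in>UNIV. of_real (\<xi> $ j) * uconv u f j \<omega>) * cnj (fhat f \<omega>))))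
   \<and>
   ((LINT \<omega>|lborel. (case \<omega> of (\<tau>, \<xi>, \<eta>) \<Rightarrow>
        chi \<omega> * \<bar>\<tau>\<bar>\<^sup>2 * jbr \<tau> powr (2 * s - 2) * jbr \<eta> powr (- 2 * r) * (cmod (fhat f \<omega>))\<^sup>2))
    = - Re (LINT \<omega>|lborel. (case \<omega> of (\<tau>, \<xi>, \<eta>) \<Rightarrow>
        complex_of_real (chi \<omega> * \<tau> * jbr \<tau> powr (2 * s - 2) * jbr \<eta> powr (- 2 * r))
        * (\<Sum>j\<in>UNIV. of_real (\<xi> $ j) * vfhat f j \<omega>) * cnj (fhat f \<omega>)))
      + Im (LINT \<omega>|lborel. (case \<omega> of (\<tau>, \<xi>, \<eta>) \<Rightarrow>
        complex_of_real (chi \<omega> * \<tau> * jbr \<tau> powr (2 * s - 2) * jbr \<eta> powr (- 2 * r))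
        * Xop u f \<omega> * cnj (fhat f \<omega>)))
      - Re (LINT \<omega>|lborel. (case \<omega> of (\<tau>, \<xi>, \<eta>) \<Rightarrow>
        complex_of_real (chi \<omega> * \<tau> * jbr \<tau> powr (2 * s - 2) * jbr \<eta> powr (- 2 * r))
        * (\<Sum>j\<in>UNIV. of_real (\<xi> $ j) * uconv u f j \<omega>) * cnj (fhat f \<omega>))))"
proof -
  interpret eta_weighted f chi s r
    by unfold_locales (use f chi r in auto)
  show ?thesis using eta_inequality[OF int1] tau_identity[OF int2] by blast
qed

end
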